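(* Consider the system of ordinary differential equations \[ \dot u=r_{1}u(1-u)-a_{12}uv-a_{13}uw,\qquad \dot v=r_{2}v(1-v)+a_{21}uv,\qquad \dot w=-\mu w+a_{31}uw, \] with all parameters positive, and its equilibria $E_0=(0,0,0)$, $E_1=(1,0,0)$, $E_2=(0,1,0)$, $E_{12}=(u^*_{12},v^*_{12},0)$ with $u^*_{12}=\frac{r_{2}(r_{1}-a_{12})}{r_{1}r_{2}+a_{12}a_{21}}$, $v^*_{12}=\frac{r_{1}r_{2}+r_{1}a_{21}}{r_{1}r_{2}+a_{12}a_{21}}$, $E_{13}=\left(\frac{\mu}{a_{31}},0,\frac{r_{1}(a_{31}-\mu)}{a_{13}a_{31}}\right)$, and $E_{*}=\left(\frac{\mu}{a_{31}},\,1+\frac{a_{21}\mu}{a_{31}r_{2}},\,\frac{r_{1}r_{2}a_{31}-r_{1}r_{2}\mu-a_{12}a_{31}r_{2}-a_{12}a_{21}\mu}{a_{13}a_{31}r_{2}}\right)$. Then: (i) $E_0$ is unstable. (ii) $E_1$ is unstable. (iii) If $r_1\le a_{12}$, then $E_2$ is globally asymptotically stable (attracting every solution with positive initial data). (iv) If $r_1>a_{12}$ and $\mu>a_{31}u^*_{12}$, then $E_{12}$ is (locally asymptotically) stable. (v) If $a_{31}>\mu$, then $E_{13}$ is unstable. (vi) If $r_{1}r_{2}a_{31}-r_{1}r_{2}\mu-a_{12}a_{31}r_{2}-a_{12}a_{21}\mu>0$, then the positive equilibrium $E_*$ exists and is (locally asymptotically) stable.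
   Context: Solutions are considered in the nonnegative orthant. $E_{12}$ lies in the nonnegative orthant exactly when $r_1>a_{12}$, and $E_{13}$ when $a_{31}>\mu$. *)

theory Defs
  imports "HOL-Analysis.Analysis"
begin

type_synonym state = "real \<times> real \<times> real"

definition field :: "real \<Rightarrow> real \<Rightarrow> real \<Rightarrow> real \<Rightarrow> real \<Rightarrow> real \<Rightarrow> real \<Rightarrow> state \<Rightarrow> state" where
  "field r1 r2 a12 a13 a21 a31 mu = (\<lambda>(u, v, w).
     (r1 * u * (1 - u) - a12 * u * v - a13 * u * w,
      r2 * v * (1 - v) + a21 * u * v,
      - mu * w + a31 * u * w))"

definition orthant :: "state set" where
  "orthant = {(u, v, w). u \<ge> 0 \<and> v \<ge> 0 \<and> w \<ge> 0}"

definition pos_orthant :: "state set" where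
  "pos_orthant = {(u, v, w). u > 0 \<and> v > 0 \<and> w > 0}"

definition ode_solution :: "(state \<Rightarrow> state) \<Rightarrow> (real \<Rightarrow> state) \<Rightarrow> bool" where
  "ode_solution F x \<longleftrightarrow> (\<forall>t\<ge>0. (x has_vector_derivative F (x t)) (at t within {0..}))"

definition is_equilibrium :: "(state \<Rightarrow> state) \<Rightarrow> state \<Rightarrow> bool" where
  "is_equilibrium F e \<longleftrightarrow> F e = 0"

definition stable_in :: "(state \<Rightarrow> state) \<Rightarrow> state set \<Rightarrow> state \<Rightarrow> bool" where
  "stable_in F D e \<longleftrightarrow>
     (\<forall>\<epsilon>>0. \<exists>\<delta>>0. \<forall>x. ode_solution F x \<and> x 0 \<in> D \<and> dist (x 0) e < \<delta> \<longrightarrow>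
        (\<forall>t\<ge>0. dist (x t) e < \<epsilon>))"

definition unstable_in :: "(state \<Rightarrow> state) \<Rightarrow> state set \<Rightarrow> state \<Rightarrow> bool" where
  "unstable_in F D e \<longleftrightarrow> \<not> stable_in F D e"

definition loc_asym_stable_in :: "(state \<Rightarrow> state) \<Rightarrow> state set \<Rightarrow> state \<Rightarrow> bool" where
  "loc_asym_stable_in F D e \<longleftrightarrow> stable_in F D e \<and>
     (\<exists>\<eta>>0. \<forall>x. ode_solution F x \<and> x 0 \<in> D \<and> dist (x 0) e < \<eta> \<longrightarrow> (x \<longlongrightarrow> e) at_top)"

definition glob_asym_stable_in :: "(state \<Rightarrow> state) \<Rightarrow> state set \<Rightarrow> state set \<Rightarrow> state \<Rightarrow> bool" where
  "glob_asym_stable_in F D P e \<longleftrightarrow> stable_in F D e \<and>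
     (\<forall>x. ode_solution F x \<and> x 0 \<in> P \<longrightarrow> (x \<longlongrightarrow> e) at_top)"

end

theory Submission
  imports Defs
begin

text \<open>
  The equilibria \<open>E0\<close>, \<open>E1\<close> and \<open>E13\<close> have \<open>v = 0\<close>, and near them the per-capita growth
  rate of \<open>v\<close> is at least \<open>r2 / 2\<close>, so any solution starting with \<open>v > 0\<close> leaves their
  neighbourhood. Such solutions exist for all times because the flow keeps a box invariant; they are
  obtained by Picard iteration for the field clipped to that box, which is globally Lipschitz.

  The equilibria \<open>E2\<close>, \<open>E12\<close> and \<open>E*\<close> are saturated: a species absent from them cannot
  invade. For such an equilibrium \<open>(p, q, s)\<close> the Volterra function
  \<open>V = \<Phi>\<^sub>p(u) + a12/a21 \<Phi>\<^sub>q(v) + a13/a31 \<Phi>\<^sub>s(w)\<close>, with \<open>\<Phi>\<^sub>a(x) = x - a - a ln (x/a)\<close>,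
  satisfies \<open>V' \<le> - r1 (u - p)\<^sup>2 - a12/a21 r2 (v - q)\<^sup>2 \<le> 0\<close> along solutions, which gives stability.
  Since \<open>V\<close> is bounded below and the solution is Lipschitz in time, \<open>u \<rightarrow> p\<close> and \<open>v \<rightarrow> q\<close>.
  If \<open>s = 0\<close> and \<open>a31 p < mu\<close>, the \<open>w\<close>-term of \<open>V'\<close> is strictly negative and \<open>w \<rightarrow> 0\<close> in the same
  way; if \<open>s > 0\<close>, then \<open>ln u\<close> converges while its derivative is \<open>- a13 (w - s)\<close> up to a
  vanishing error, which forces \<open>w \<rightarrow> s\<close>.
\<close>

section \<open>Real functions on \<open>[0, \<infinity>)\<close>\<close>

lemma deriv_le_imp_increment_le:
  fixes f :: "real \<Rightarrow> real"
  assumes f': "\<And>t. t \<ge> 0 \<Longrightarrow> (f has_real_derivative f' t) (at t within {0..})"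
    and ab: "0 \<le> a" "a \<le> b" and bound: "\<And>t. a < t \<Longrightarrow> t < b \<Longrightarrow> f' t \<le> m"
  shows "f b - f a \<le> m * (b - a)"
proof (cases "a = b")
  case False
  then have "a < b" using ab by simp
  have "continuous_on {0..} f"
    unfolding continuous_on_eq_continuous_within using f' DERIV_continuous by blast
  then have cont: "continuous_on {a..b} f" by (rule continuous_on_subset) (use ab in auto)
  have at: "(f has_real_derivative f' t) (at t)" if "0 < t" for t
    using f'[of t] that at_within_interior[of t "{0..}"] by simp
  have "f differentiable at t" if "a < t" "t < b" for t
    using at[of t] that ab real_differentiable_def by force
  then obtain l z where z: "a < z" "z < b" "(f has_real_derivative l) (at z)" "f b - f a = (b - a) * l"
    using MVT[OF \<open>a < b\<close> cont] by blast
  have "l = f' z" using z at[of z] ab DERIV_unique by force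
  then show ?thesis using z bound[of z] \<open>a < b\<close> by (simp add: mult.commute mult_right_mono)
qed simp

lemma deriv_ge_imp_increment_ge:
  fixes f :: "real \<Rightarrow> real"
  assumes f': "\<And>t. t \<ge> 0 \<Longrightarrow> (f has_real_derivative f' t) (at t within {0..})"
    and ab: "0 \<le> a" "a \<le> b" and bound: "\<And>t. a < t \<Longrightarrow> t < b \<Longrightarrow> f' t \<ge> m"
  shows "f b - f a \<ge> m * (b - a)"
  using deriv_le_imp_increment_le[where f="\<lambda>t. - f t" and f'="\<lambda>t. - f' t" and m="- m"] assms
  by (force intro: derivative_intros)

lemma abs_deriv_le_imp_lipschitz:
  fixes f :: "real \<Rightarrow> real"
  assumes f': "\<And>t. t \<ge> 0 \<Longrightarrow> (f has_real_derivative f' t) (at t within {0..})"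
    and bound: "\<And>t. t \<ge> 0 \<Longrightarrow> \<bar>f' t\<bar> \<le> K" and "s \<ge> 0" "t \<ge> 0"
  shows "\<bar>f s - f t\<bar> \<le> K * \<bar>s - t\<bar>"
proof -
  have *: "\<bar>f b - f a\<bar> \<le> K * (b - a)" if "0 \<le> a" "a \<le> b" for a b
  proof -
    have "f b - f a \<le> K * (b - a)"
      by (rule deriv_le_imp_increment_le[OF f' that]) (use bound that in \<open>auto simp: abs_le_iff\<close>)
    moreover have "f b - f a \<ge> (- K) * (b - a)"
    proof (rule deriv_ge_imp_increment_ge[OF f' that])
      fix \<tau> assume "a < \<tau>"
      then show "- K \<le> f' \<tau>" using bound[of \<tau>] that by (simp add: abs_le_iff)
    qed
    ultimately show ?thesis by (simp add: abs_le_iff)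
  qed
  show ?thesis
    using *[of s t] *[of t s] \<open>s \<ge> 0\<close> \<open>t \<ge> 0\<close> by (cases "s \<le> t") (auto simp: abs_minus_commute)
qed

lemma le_max_if_deriv_nonpos_above:
  fixes f :: "real \<Rightarrow> real"
  assumes f': "\<And>t. t \<ge> 0 \<Longrightarrow> (f has_real_derivative f' t) (at t within {0..})"
    and above: "\<And>t. t \<ge> 0 \<Longrightarrow> f t > M \<Longrightarrow> f' t \<le> 0" and "t \<ge> 0"
  shows "f t \<le> max (f 0) M"
proof (rule ccontr)
  define m where "m = max (f 0) M"
  assume "\<not> f t \<le> max (f 0) M"
  then have ft: "f t > m" unfolding m_def by linarith
  define S where "S = {0..t} \<inter> f -` {..m}"
  have "continuous_on {0..} f"
    unfolding continuous_on_eq_continuous_within using f' DERIV_continuous by blast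
  then have "continuous_on {0..t} f" by (rule continuous_on_subset) auto
  then have "closed S" unfolding S_def by (rule continuous_closed_preimage) auto
  moreover have "0 \<in> S" "bdd_above S" using \<open>t \<ge> 0\<close> unfolding S_def m_def by auto
  ultimately have "Sup S \<in> S" using closed_contains_Sup by blast
  then have s0: "0 \<le> Sup S" "Sup S \<le> t" "f (Sup S) \<le> m" unfolding S_def by auto
  \<comment> \<open>after the last time at which \<open>f \<le> m\<close>, \<open>f\<close> stays above \<open>m\<close> and hence cannot increase\<close>
  have "f s > m" if "Sup S < s" "s \<le> t" for s
    using that cSup_upper[OF _ \<open>bdd_above S\<close>, of s] s0 unfolding S_def by force
  then have "f t - f (Sup S) \<le> 0 * (t - Sup S)"
    using s0 by (intro deriv_le_imp_increment_le[OF f'] above) (auto simp: m_def)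
  then show False using ft s0 by simp
qed

lemma linear_deriv_imp_exp_integral:
  fixes y g :: "real \<Rightarrow> real"
  assumes y': "\<And>t. t \<ge> 0 \<Longrightarrow> (y has_real_derivative y t * g t) (at t within {0..})"
    and "continuous_on {0..} g" and "t \<ge> 0"
  shows "y t = y 0 * exp (integral {0..t} g)"
proof -
  define G where "G s = integral {0..s} g" for s
  have "continuous_on {0..t} g" using assms(2) by (rule continuous_on_subset) auto
  then have G': "(G has_real_derivative g s) (at s within {0..t})" if "s \<in> {0..t}" for s
    unfolding G_def using integral_has_vector_derivative that
    by (simp add: has_real_derivative_iff_has_vector_derivative)
  have "((\<lambda>s. y s * exp (- G s)) has_real_derivative 0) (at s within {0..t})" if s: "s \<in> {0..t}" for s
  proof -
    have "(y has_real_derivative y s * g s) (at s within {0..t})"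
      using DERIV_subset[OF y'[of s]] s by auto
    from DERIV_mult[OF this DERIV_chain2[OF DERIV_exp DERIV_minus[OF G'[OF s]]]]
    show ?thesis by (simp add: algebra_simps)
  qed
  then obtain c where "\<forall>s\<in>{0..t}. y s * exp (- G s) = c"
    using has_field_derivative_zero_constant[of "{0..t}" "\<lambda>s. y s * exp (- G s)"] by auto
  then have "y t * exp (- G t) = y 0 * exp (- G 0)" using \<open>t \<ge> 0\<close> by auto
  then show ?thesis unfolding G_def by (simp add: exp_minus field_simps)
qed

lemma lyapunov_decay_imp_tendsto:
  fixes V V' y :: "real \<Rightarrow> real"
  assumes V': "\<And>t. t \<ge> 0 \<Longrightarrow> (V has_real_derivative V' t) (at t within {0..})"
    and V_nonneg: "\<And>t. t \<ge> 0 \<Longrightarrow> V t \<ge> 0"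
    and decay: "\<And>t. t \<ge> 0 \<Longrightarrow> V' t \<le> - c * (y t - a)\<^sup>2" and "c > 0"
    and "K > 0" and lip: "\<And>s t. s \<ge> 0 \<Longrightarrow> t \<ge> 0 \<Longrightarrow> \<bar>y s - y t\<bar> \<le> K * \<bar>s - t\<bar>"
  shows "(y \<longlongrightarrow> a) at_top"
proof -
  have V'_nonpos: "V' t \<le> 0" if "t \<ge> 0" for t
  proof -
    have "c * (y t - a)\<^sup>2 \<ge> 0" using \<open>c > 0\<close> by simp
    then show ?thesis using decay[OF that] by linarith
  qed
  have antimono: "V t \<le> V s" if "0 \<le> s" "s \<le> t" for s t
    using deriv_le_imp_increment_le[OF V' that, of 0] V'_nonpos that by auto
  define L where "L = Inf (V ` {0..})"
  have bdd: "bdd_below (V ` {0..})" using V_nonneg by (auto intro!: bdd_belowI[of _ 0])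
  have L_le: "L \<le> V t" if "t \<ge> 0" for t unfolding L_def using bdd that by (auto intro!: cInf_lower)
  show ?thesis unfolding tendsto_iff eventually_at_top_linorder dist_real_def
  proof (intro allI impI)
    fix \<epsilon> :: real assume "\<epsilon> > 0"
    define h where "h = \<epsilon> / (2 * K)"
    have "h > 0" unfolding h_def using \<open>\<epsilon> > 0\<close> \<open>K > 0\<close> by simp
    define drop where "drop = c * (\<epsilon>/2)\<^sup>2 * h"
    have "drop > 0" unfolding drop_def using \<open>c > 0\<close> \<open>\<epsilon> > 0\<close> \<open>h > 0\<close> by simp
    then have "Inf (V ` {0..}) < L + drop" unfolding L_def by simp
    then obtain T where T: "T \<ge> 0" "V T < L + drop"
      using cInf_less_iff[OF _ bdd] by auto
    \<comment> \<open>if \<open>y\<close> were far from \<open>a\<close> at a time \<open>t \<ge> T\<close>, it would stay far on \<open>[t, t + h]\<close>,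
      and \<open>V\<close> would drop below its infimum\<close>
    have "\<bar>y t - a\<bar> < \<epsilon>" if "t \<ge> T" for t
    proof (rule ccontr)
      assume far: "\<not> \<bar>y t - a\<bar> < \<epsilon>"
      have "V (t + h) - V t \<le> (- c * (\<epsilon>/2)\<^sup>2) * ((t + h) - t)"
      proof (rule deriv_le_imp_increment_le[OF V'])
        fix s assume s: "t < s" "s < t + h"
        have "\<bar>y s - y t\<bar> \<le> K * \<bar>s - t\<bar>" using lip[of s t] s that T by simp
        also have "\<dots> \<le> K * h" using s \<open>K > 0\<close> by (intro mult_left_mono) auto
        finally have "\<bar>y s - y t\<bar> \<le> K * h" .
        then have "\<bar>y s - y t\<bar> \<le> \<epsilon> / 2" using \<open>K > 0\<close> unfolding h_def by simp
        then have "\<epsilon> / 2 \<le> \<bar>y s - a\<bar>" using far by linarith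
        then have "(\<epsilon>/2)\<^sup>2 \<le> \<bar>y s - a\<bar>\<^sup>2" using \<open>\<epsilon> > 0\<close> by (intro power_mono) auto
        then have "c * (\<epsilon>/2)\<^sup>2 \<le> c * (y s - a)\<^sup>2" using \<open>c > 0\<close> by simp
        then show "V' s \<le> - c * (\<epsilon>/2)\<^sup>2" using decay[of s] s that T by simp
      qed (use that T \<open>h > 0\<close> in auto)
      then have "V (t + h) \<le> V T - drop" using antimono[of T t] that T unfolding drop_def by simp
      then show False using L_le[of "t + h"] that T \<open>h > 0\<close> by simp
    qed
    then show "\<exists>T. \<forall>t\<ge>T. \<bar>y t - a\<bar> < \<epsilon>" by blast
  qed
qed

lemma eventually_less_of_convergent_antiderivative:
  fixes l w A B :: "real \<Rightarrow> real"
  assumes l': "\<And>t. t \<ge> 0 \<Longrightarrow> (l has_real_derivative A t) (at t within {0..})"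
    and w': "\<And>t. t \<ge> 0 \<Longrightarrow> (w has_real_derivative B t) (at t within {0..})"
    and "(l \<longlongrightarrow> L) at_top" and "((\<lambda>t. A t + c * (w t - s)) \<longlongrightarrow> 0) at_top" and "(B \<longlongrightarrow> 0) at_top"
    and "c > 0" and "\<eta> > 0"
  shows "eventually (\<lambda>t. w t < s + \<eta>) at_top"
proof -
  define \<kappa> where "\<kappa> = c * \<eta> / 4"
  have "\<kappa> > 0" using \<open>c > 0\<close> \<open>\<eta> > 0\<close> by (simp add: \<kappa>_def)
  have "eventually (\<lambda>t. t \<ge> 0 \<and> \<bar>l t - L\<bar> < \<kappa> / 2 \<and> \<bar>A t + c * (w t - s)\<bar> < \<kappa> \<and> \<bar>B t\<bar> < \<eta> / 2) at_top"
    using eventually_ge_at_top[of 0] tendstoD[OF assms(3), of "\<kappa> / 2"] tendstoD[OF assms(4), of \<kappa>]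
      tendstoD[OF assms(5), of "\<eta> / 2"] \<open>\<kappa> > 0\<close> \<open>\<eta> > 0\<close>
    by (auto intro!: eventually_conj simp: dist_real_def)
  then obtain N where N: "\<And>t. t \<ge> N \<Longrightarrow> t \<ge> 0 \<and> \<bar>l t - L\<bar> < \<kappa> / 2 \<and> \<bar>A t + c * (w t - s)\<bar> < \<kappa> \<and> \<bar>B t\<bar> < \<eta> / 2"
    unfolding eventually_at_top_linorder by blast
  \<comment> \<open>if \<open>w\<close> were high at a late time, it would stay high for a unit of time, during which \<open>l\<close> would drop by \<open>\<kappa>\<close>\<close>
  have "w t < s + \<eta>" if "t \<ge> N" for t
  proof (rule ccontr)
    assume high: "\<not> w t < s + \<eta>"
    have "l (t + 1) - l t \<le> (- \<kappa>) * ((t + 1) - t)"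
    proof (rule deriv_le_imp_increment_le[OF l'])
      fix \<sigma> assume \<sigma>: "t < \<sigma>" "\<sigma> < t + 1"
      have "w \<sigma> - w t \<ge> (- (\<eta> / 2)) * (\<sigma> - t)"
      proof (rule deriv_ge_imp_increment_ge[OF w'])
        fix \<tau> assume "t < \<tau>"
        then have "\<bar>B \<tau>\<bar> < \<eta> / 2" using N[of \<tau>] that by simp
        then show "- (\<eta> / 2) \<le> B \<tau>" by linarith
      qed (use N that \<sigma> in auto)
      moreover have "(\<eta> / 2) * (\<sigma> - t) \<le> \<eta> / 2" using \<sigma> \<open>\<eta> > 0\<close> by simp
      ultimately have "2 * \<kappa> \<le> c * (w \<sigma> - s)" using high \<open>c > 0\<close> by (simp add: \<kappa>_def)
      moreover have "\<bar>A \<sigma> + c * (w \<sigma> - s)\<bar> < \<kappa>" using N[of \<sigma>] that \<sigma> by simp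
      ultimately show "A \<sigma> \<le> - \<kappa>" by linarith
    qed (use N that in auto)
    then have "l (t + 1) - l t \<le> - \<kappa>" by simp
    moreover have "\<bar>l t - L\<bar> < \<kappa> / 2" "\<bar>l (t + 1) - L\<bar> < \<kappa> / 2"
      using N[of t] N[of "t + 1"] that by simp_all
    ultimately show False by arith
  qed
  then show ?thesis unfolding eventually_at_top_linorder by blast
qed

lemma tendsto_of_convergent_antiderivative:
  fixes l w A B :: "real \<Rightarrow> real"
  assumes l': "\<And>t. t \<ge> 0 \<Longrightarrow> (l has_real_derivative A t) (at t within {0..})"
    and w': "\<And>t. t \<ge> 0 \<Longrightarrow> (w has_real_derivative B t) (at t within {0..})"
    and "(l \<longlongrightarrow> L) at_top" and "((\<lambda>t. A t + c * (w t - s)) \<longlongrightarrow> 0) at_top" and "(B \<longlongrightarrow> 0) at_top"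
    and "c > 0"
  shows "(w \<longlongrightarrow> s) at_top"
proof (rule tendstoI)
  fix \<eta> :: real assume "\<eta> > 0"
  have "eventually (\<lambda>t. w t < s + \<eta>) at_top"
    by (rule eventually_less_of_convergent_antiderivative[OF assms \<open>\<eta> > 0\<close>])
  moreover have "eventually (\<lambda>t. - w t < - s + \<eta>) at_top"
  proof (rule eventually_less_of_convergent_antiderivative)
    show "((\<lambda>t. - l t) has_real_derivative - A t) (at t within {0..})"
      and "((\<lambda>t. - w t) has_real_derivative - B t) (at t within {0..})" if "t \<ge> 0" for t
      using DERIV_minus[OF l'[OF that]] DERIV_minus[OF w'[OF that]] .
    show "((\<lambda>t. - l t) \<longlongrightarrow> - L) at_top" using assms(3) by (rule tendsto_minus)
    have "(\<lambda>t. - A t + c * (- w t - - s)) = (\<lambda>t. - (A t + c * (w t - s)))"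
      by (simp add: fun_eq_iff algebra_simps)
    then show "((\<lambda>t. - A t + c * (- w t - - s)) \<longlongrightarrow> 0) at_top"
      using tendsto_minus[OF assms(4)] by simp
    show "((\<lambda>t. - B t) \<longlongrightarrow> 0) at_top" using tendsto_minus[OF assms(5)] by simp
  qed (use \<open>c > 0\<close> \<open>\<eta> > 0\<close> in auto)
  ultimately show "eventually (\<lambda>t. dist (w t) s < \<eta>) at_top"
    by eventually_elim (simp add: dist_real_def abs_less_iff)
qed

section \<open>Global solutions of globally Lipschitz equations\<close>

primrec picard_iter :: "('a::euclidean_space \<Rightarrow> 'a) \<Rightarrow> 'a \<Rightarrow> nat \<Rightarrow> real \<Rightarrow> 'a" where
  "picard_iter G x0 0 = (\<lambda>t. x0)"
| "picard_iter G x0 (Suc n) = (\<lambda>t. x0 + integral {0..t} (\<lambda>s. G (picard_iter G x0 n s)))"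

lemma has_integral_power_from_0:
  fixes t :: real assumes "t \<ge> 0"
  shows "((\<lambda>s. s ^ k) has_integral t ^ Suc k / Suc k) {0..t}"
proof -
  have "((\<lambda>s. s ^ Suc k / Suc k) has_real_derivative s ^ k) (at s within {0..t})" for s
    using DERIV_cdivide[OF DERIV_pow[of "Suc k" s], of "Suc k"]
    by (simp add: has_field_derivative_at_within del: of_nat_Suc)
  then show ?thesis
    using fundamental_theorem_of_calculus[of 0 t "\<lambda>s. s ^ Suc k / Suc k" "\<lambda>s. s ^ k"] assms
    by (simp add: has_real_derivative_iff_has_vector_derivative)
qed

lemma continuous_on_picard_iter:
  assumes "continuous_on UNIV G"
  shows "continuous_on {0..T} (picard_iter G x0 n)"
proof (induction n)
  case (Suc n)
  have "continuous_on {0..T} (\<lambda>s. G (picard_iter G x0 n s))"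
    by (rule continuous_on_compose2[OF assms Suc]) auto
  from integral_has_vector_derivative[OF this]
  have "continuous_on {0..T} (\<lambda>t. integral {0..t} (\<lambda>s. G (picard_iter G x0 n s)))"
    unfolding continuous_on_eq_continuous_within using has_vector_derivative_continuous by blast
  then show ?case by (simp add: continuous_on_add)
qed simp

lemma picard_iter_step_le:
  assumes lip: "L-lipschitz_on UNIV G" and "t \<ge> 0"
  shows "norm (picard_iter G x0 (Suc n) t - picard_iter G x0 n t)
    \<le> norm (G x0) * L ^ n * t ^ Suc n / fact (Suc n)"
  using \<open>t \<ge> 0\<close>
proof (induction n arbitrary: t)
  case 0
  then show ?case by (simp add: integral_const_real)
next
  case (Suc n)
  define X where "X = picard_iter G x0"
  define c where "c = L * (norm (G x0) * L ^ n / fact (Suc n))"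
  have L: "L \<ge> 0" using lipschitz_on_nonneg[OF lip] .
  have int: "(\<lambda>s. G (X m s)) integrable_on {0..t}" for m
    unfolding X_def using lipschitz_on_continuous_on[OF lip]
    by (intro integrable_continuous_real continuous_on_compose2[OF _ continuous_on_picard_iter]) auto
  have X_Suc: "X (Suc m) t = x0 + integral {0..t} (\<lambda>s. G (X m s))" for m
    by (simp add: X_def)
  have "X (Suc (Suc n)) t - X (Suc n) t = integral {0..t} (\<lambda>s. G (X (Suc n) s) - G (X n s))"
    unfolding integral_diff[OF int int] X_Suc by simp
  also have "norm \<dots> \<le> integral {0..t} (\<lambda>s. c * s ^ Suc n)"
  proof (rule integral_norm_bound_integral)
    show "(\<lambda>s. G (X (Suc n) s) - G (X n s)) integrable_on {0..t}" by (rule integrable_diff[OF int int])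
    show "(\<lambda>s. c * s ^ Suc n) integrable_on {0..t}"
      by (rule integrable_continuous_real) (auto intro!: continuous_intros)
    fix s assume s: "s \<in> {0..t}"
    have "norm (G (X (Suc n) s) - G (X n s)) \<le> L * norm (X (Suc n) s - X n s)"
      using lipschitz_onD[OF lip] by (simp add: dist_norm)
    also have "\<dots> \<le> L * (norm (G x0) * L ^ n * s ^ Suc n / fact (Suc n))"
      using mult_left_mono[OF Suc.IH[of s] L] s unfolding X_def by simp
    also have "\<dots> = c * s ^ Suc n"
      unfolding c_def by simp
    finally show "norm (G (X (Suc n) s) - G (X n s)) \<le> c * s ^ Suc n" .
  qed
  also have "\<dots> = c * (t ^ Suc (Suc n) / Suc (Suc n))"
    using has_integral_mult_right[OF has_integral_power_from_0[OF Suc.prems]] by (rule integral_unique)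
  also have "\<dots> = norm (G x0) * L ^ Suc n * t ^ Suc (Suc n) / fact (Suc (Suc n))"
    unfolding c_def by (simp add: field_simps del: of_nat_Suc)
  finally show ?case unfolding X_def .
qed

lemma picard_iter_uniform_limit:
  assumes "L-lipschitz_on UNIV G"
  obtains Y where "\<And>T. uniform_limit {0..T} (picard_iter G x0) Y sequentially"
proof -
  define X where "X = picard_iter G x0"
  define d where "d k t = X (Suc k) t - X k t" for k t
  define M where "M T n = norm (G x0) * L ^ n * \<bar>T\<bar> ^ Suc n / fact (Suc n)" for T n
  have L: "L \<ge> 0" using lipschitz_on_nonneg[OF assms] .
  have d_le: "norm (d n t) \<le> M T n" if "t \<in> {0..T}" for n t T
  proof -
    have "norm (G x0) * L ^ n * t ^ Suc n / fact (Suc n) \<le> M T n"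
      unfolding M_def using that L by (intro divide_right_mono mult_left_mono power_mono) auto
    then show ?thesis using picard_iter_step_le[OF assms, of t x0 n] that unfolding d_def X_def by simp
  qed
  have summable_M: "summable (M T)" for T
  proof (rule summable_comparison_test')
    show "summable (\<lambda>n. norm (G x0) * \<bar>T\<bar> * (inverse (fact n) * (L * \<bar>T\<bar>) ^ n))"
      by (rule summable_mult[OF summable_exp])
    have "M T n \<le> norm (G x0) * \<bar>T\<bar> * (L * \<bar>T\<bar>) ^ n / fact n" for n
    proof -
      have "M T n = norm (G x0) * \<bar>T\<bar> * (L * \<bar>T\<bar>) ^ n / fact (Suc n)"
        unfolding M_def by (simp add: power_mult_distrib field_simps)
      also have "\<dots> \<le> norm (G x0) * \<bar>T\<bar> * (L * \<bar>T\<bar>) ^ n / fact n"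
        by (rule divide_left_mono) (use L in \<open>auto simp: fact_mono\<close>)
      finally show ?thesis .
    qed
    then show "norm (M T n) \<le> norm (G x0) * \<bar>T\<bar> * (inverse (fact n) * (L * \<bar>T\<bar>) ^ n)" for n
      unfolding M_def using L by (simp add: field_simps)
  qed
  have "uniform_limit {0..T} (\<lambda>n t. \<Sum>k<n. d k t) (\<lambda>t. \<Sum>k. d k t) sequentially" for T
    using d_le[where T=T] summable_M[of T] by (rule Weierstrass_m_test)
  then have "uniform_limit {0..T} (\<lambda>n t. x0 + (\<Sum>k<n. d k t)) (\<lambda>t. x0 + (\<Sum>k. d k t)) sequentially" for T
    by (intro uniform_limit_add uniform_limit_const)
  moreover have "X = (\<lambda>n t. x0 + (\<Sum>k<n. d k t))"
  proof (intro ext)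
    fix n t
    have "X 0 t = x0" by (simp add: X_def)
    then show "X n t = x0 + (\<Sum>k<n. d k t)"
      unfolding d_def using sum_lessThan_telescope[of "\<lambda>k. X k t" n] by simp
  qed
  ultimately have "uniform_limit {0..T} X (\<lambda>t. x0 + (\<Sum>k. d k t)) sequentially" for T
    by simp
  then have "uniform_limit {0..T} (picard_iter G x0) (\<lambda>t. x0 + (\<Sum>k. d k t)) sequentially" for T
    by (simp only: X_def)
  then show ?thesis by (rule that)
qed

lemma integral_equation_imp_has_vector_derivative:
  fixes Y :: "real \<Rightarrow> 'a::euclidean_space"
  assumes "\<And>T. continuous_on {0..T} Y" and "continuous_on UNIV G"
    and Y: "\<And>t. t \<ge> 0 \<Longrightarrow> Y t = x0 + integral {0..t} (\<lambda>s. G (Y s))" and "t \<ge> 0"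
  shows "(Y has_vector_derivative G (Y t)) (at t within {0..})"
proof -
  have t: "t \<in> {0..t + 1}" using \<open>t \<ge> 0\<close> by simp
  have "continuous_on {0..t + 1} (\<lambda>s. G (Y s))"
    by (rule continuous_on_compose2[OF assms(2,1)]) auto
  from integral_has_vector_derivative[OF this t]
  have "((\<lambda>u. x0 + integral {0..u} (\<lambda>s. G (Y s))) has_vector_derivative G (Y t)) (at t within {0..t + 1})"
    by (auto intro!: derivative_eq_intros)
  then have "(Y has_vector_derivative G (Y t)) (at t within {0..t + 1})"
    by (rule has_vector_derivative_transform_within[where d=1]) (use t Y in auto)
  moreover have "at t within {0..t + 1} = at t within {0..}"
    by (rule at_within_nhd[of t "{..<t + 1}"]) auto
  ultimately show ?thesis by simp
qed

theorem lipschitz_ode_solution_exists: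
  fixes G :: "'a::euclidean_space \<Rightarrow> 'a"
  assumes lip: "L-lipschitz_on UNIV G"
  obtains x where "x 0 = x0" and "\<And>t. t \<ge> 0 \<Longrightarrow> (x has_vector_derivative G (x t)) (at t within {0..})"
proof -
  obtain Y where lim: "\<And>T. uniform_limit {0..T} (picard_iter G x0) Y sequentially"
    using picard_iter_uniform_limit[OF lip, where ?x0.0=x0] by blast
  have contG: "continuous_on UNIV G" using lipschitz_on_continuous_on[OF lip] .
  have contX: "continuous_on {0..T} (picard_iter G x0 n)" for n T
    using continuous_on_picard_iter[OF contG] .
  have contY: "continuous_on {0..T} Y" for T
    by (rule uniform_limit_theorem[OF _ lim]) (auto intro: always_eventually contX)
  have Y: "Y t = x0 + integral {0..t} (\<lambda>s. G (Y s))" if "t \<ge> 0" for t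
  proof -
    have "uniform_limit {0..t} (\<lambda>n s. G (picard_iter G x0 n s)) (\<lambda>s. G (Y s)) sequentially"
      by (rule uniform_limit_compose_uniformly_continuous_on[OF lim lipschitz_on_uniformly_continuous[OF lip]])
        auto
    moreover have "continuous_on {0..t} (\<lambda>s. G (picard_iter G x0 n s))" for n
      by (rule continuous_on_compose2[OF contG contX]) auto
    ultimately obtain I J where I: "\<And>n. ((\<lambda>s. G (picard_iter G x0 n s)) has_integral I n) {0..t}"
      and J: "((\<lambda>s. G (Y s)) has_integral J) {0..t}" and "I \<longlonglongrightarrow> J"
      by (rule uniform_limit_integral) auto
    then have "(\<lambda>n. picard_iter G x0 (Suc n) t) \<longlonglongrightarrow> x0 + J"
      using integral_unique[OF I] by (simp add: tendsto_add)
    moreover have "(\<lambda>n. picard_iter G x0 (Suc n) t) \<longlonglongrightarrow> Y t"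
      using tendsto_uniform_limitI[OF lim[of t], of t] that by (intro LIMSEQ_Suc) simp
    ultimately have "x0 + J = Y t" by (rule LIMSEQ_unique)
    then show ?thesis using integral_unique[OF J] by simp
  qed
  have "(Y has_vector_derivative G (Y t)) (at t within {0..})" if "t \<ge> 0" for t
    using integral_equation_imp_has_vector_derivative[OF contY contG Y that] .
  moreover have "Y 0 = x0" using Y[of 0] by simp
  ultimately show ?thesis using that by blast
qed

section \<open>The Volterra function\<close>

text \<open>For \<open>a = 0\<close> the junk values \<open>x / 0 = 0\<close> and \<open>ln 0 = 0\<close> make \<open>volterra 0 x = x\<close>,
  which is the right Lyapunov term for a coordinate that vanishes at the equilibrium.\<close>
definition volterra :: "real \<Rightarrow> real \<Rightarrow> real" where
  "volterra a x = x - a - a * ln (x / a)"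

definition volterra_dom :: "real \<Rightarrow> real \<Rightarrow> bool" where
  "volterra_dom a x \<longleftrightarrow> x \<ge> 0 \<and> (a > 0 \<longrightarrow> x > 0)"

lemma volterra_0 [simp]: "volterra 0 x = x"
  by (simp add: volterra_def)

lemma volterra_self [simp]: "volterra a a = 0"
  by (cases "a = 0") (simp_all add: volterra_def)

lemma volterra_diff_ge:
  assumes "a \<ge> 0" "x > 0" "z > 0"
  shows "volterra a x - volterra a z \<ge> (x - z) * (1 - a / z)"
proof -
  have "a * (ln x - ln z) \<le> a * ((x - z) / z)"
    using ln_diff_le[OF assms(2,3)] assms(1) by (rule mult_left_mono)
  then show ?thesis
    using assms by (cases "a = 0") (auto simp: volterra_def ln_div field_simps)
qed

lemma volterra_pos:
  assumes "a > 0" "x > 0" "x \<noteq> a"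
  shows "volterra a x > 0"
proof -
  have "a * (ln x - ln a) < a * ((x - a) / a)"
    using ln_diff_less[OF assms(2,1,3)] assms(1) by (rule mult_strict_left_mono)
  also have "\<dots> = x - a" using assms(1) by simp
  finally show ?thesis using assms by (simp add: volterra_def ln_div algebra_simps)
qed

lemma volterra_nonneg:
  assumes "a \<ge> 0" "volterra_dom a x"
  shows "volterra a x \<ge> 0"
  using assms volterra_pos[of a x] by (cases "a = 0"; cases "x = a") (auto simp: volterra_dom_def)

lemma le_volterra_bound:
  assumes "a \<ge> 0" "volterra_dom a x"
  shows "x \<le> 2 * (volterra a x + a)"
proof (cases "a = 0")
  case False
  then have "a > 0" "x > 0" using assms by (auto simp: volterra_dom_def)
  have ln_le_half: "ln y \<le> y / 2" if "y > 0" for y :: real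
  proof -
    have "ln y = 2 * ln (sqrt y)" using ln_sqrt[of y] that by simp
    also have "\<dots> \<le> 2 * (sqrt y - 1)" using ln_le_minus_one[of "sqrt y"] that by simp
    also have "\<dots> \<le> y / 2"
    proof -
      have "0 \<le> (sqrt y - 2)\<^sup>2" by simp
      also have "\<dots> = y - 4 * sqrt y + 4" using that by (simp add: power2_eq_square algebra_simps)
      finally show ?thesis by simp
    qed
    finally show ?thesis .
  qed
  have "a * ln (x / a) \<le> a * (x / a / 2)"
    using ln_le_half[of "x / a"] \<open>a > 0\<close> \<open>x > 0\<close> by (intro mult_left_mono) auto
  then show ?thesis using \<open>a > 0\<close> by (simp add: volterra_def)
qed (use assms in \<open>simp add: volterra_dom_def\<close>)

lemma volterra_small_imp_near:
  assumes "a \<ge> 0" "\<rho> > 0"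
  obtains m where "m > 0" and "\<And>x. volterra_dom a x \<Longrightarrow> volterra a x < m \<Longrightarrow> \<bar>x - a\<bar> < \<rho>"
proof (cases "a = 0")
  case True
  then show ?thesis using that[of \<rho>] assms by (auto simp: volterra_dom_def)
next
  case False
  then have "a > 0" using assms by simp
  define r where "r = min \<rho> (a / 2)"
  have r: "r > 0" "r \<le> \<rho>" "r < a" using \<open>a > 0\<close> assms unfolding r_def by auto
  define m where "m = min (volterra a (a + r)) (volterra a (a - r))"
  have "m > 0" unfolding m_def using volterra_pos[of a "a + r"] volterra_pos[of a "a - r"] \<open>a > 0\<close> r by auto
  \<comment> \<open>\<open>volterra a\<close> decreases on \<open>(0, a]\<close> and increases on \<open>[a, \<infinity>)\<close>\<close>
  moreover have "\<bar>x - a\<bar> < \<rho>" if x: "volterra_dom a x" "volterra a x < m" for x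
  proof (rule ccontr)
    assume "\<not> \<bar>x - a\<bar> < \<rho>"
    then consider "x \<ge> a + r" | "x \<le> a - r" using r by linarith
    then show False
    proof cases
      case 1
      have "volterra a x - volterra a (a + r) \<ge> (x - (a + r)) * (1 - a / (a + r))"
        by (rule volterra_diff_ge) (use \<open>a > 0\<close> r 1 in auto)
      moreover have "(x - (a + r)) * (1 - a / (a + r)) \<ge> 0"
        using 1 \<open>a > 0\<close> r by (intro mult_nonneg_nonneg) (auto simp: field_simps)
      ultimately show False using x unfolding m_def by linarith
    next
      case 2
      have "x > 0" using x \<open>a > 0\<close> by (auto simp: volterra_dom_def)
      then have "volterra a x - volterra a (a - r) \<ge> (x - (a - r)) * (1 - a / (a - r))"
        by (intro volterra_diff_ge) (use \<open>a > 0\<close> r in auto)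
      moreover have "(x - (a - r)) * (1 - a / (a - r)) \<ge> 0"
        using 2 \<open>a > 0\<close> r by (intro mult_nonpos_nonpos) (auto simp: field_simps)
      ultimately show False using x unfolding m_def by linarith
    qed
  qed
  ultimately show ?thesis using that by blast
qed

lemma isCont_volterra:
  assumes "a \<ge> 0"
  shows "isCont (volterra a) a"
proof (cases "a = 0")
  case True
  then have "volterra a = (\<lambda>x. x)" by (auto simp: fun_eq_iff)
  then show ?thesis by simp
next
  case False
  then show ?thesis unfolding volterra_def[abs_def] using assms by (auto intro!: continuous_intros)
qed

lemma has_real_derivative_volterra:
  assumes "a \<ge> 0" and y': "(y has_real_derivative y t * g) (at t within S)" and "volterra_dom a (y t)"
  shows "((\<lambda>t. volterra a (y t)) has_real_derivative (y t - a) * g) (at t within S)"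
proof (cases "a = 0")
  case False
  then have "a > 0" "y t > 0" using assms by (auto simp: volterra_dom_def)
  then have "((\<lambda>t. y t - a - a * ln (y t / a)) has_real_derivative
      y t * g - a * ((y t * g / a) / (y t / a))) (at t within S)"
    by (auto intro!: derivative_eq_intros y')
  moreover have "y t * g - a * ((y t * g / a) / (y t / a)) = (y t - a) * g"
    using \<open>a > 0\<close> \<open>y t > 0\<close> by (simp add: field_simps)
  ultimately show ?thesis unfolding volterra_def by simp
qed (use y' in simp)

lemma has_vector_derivative_components:
  assumes "(x has_vector_derivative (D :: real \<times> real \<times> real)) (at t within S)"
  shows "((\<lambda>t. fst (x t)) has_real_derivative fst D) (at t within S)"
    and "((\<lambda>t. fst (snd (x t))) has_real_derivative fst (snd D)) (at t within S)"
    and "((\<lambda>t. snd (snd (x t))) has_real_derivative snd (snd D)) (at t within S)"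
  using bounded_linear.has_vector_derivative[OF bounded_linear_fst assms]
    bounded_linear.has_vector_derivative[OF bounded_linear_fst_comp[OF bounded_linear_snd] assms]
    bounded_linear.has_vector_derivative[OF bounded_linear_snd_comp[OF bounded_linear_snd] assms]
  by (simp_all add: has_real_derivative_iff_has_vector_derivative)

locale three_species =
  fixes r1 r2 a12 a13 a21 a31 mu :: real
  assumes pos: "r1 > 0" "r2 > 0" "a12 > 0" "a13 > 0" "a21 > 0" "a31 > 0" "mu > 0"
begin

abbreviation "F \<equiv> field r1 r2 a12 a13 a21 a31 mu"

lemma ode_solution_derivs:
  assumes "ode_solution F x" "t \<ge> 0"
  shows "((\<lambda>t. fst (x t)) has_real_derivative
           fst (x t) * (r1 * (1 - fst (x t)) - a12 * fst (snd (x t)) - a13 * snd (snd (x t)))) (at t within {0..})"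
    and "((\<lambda>t. fst (snd (x t))) has_real_derivative
           fst (snd (x t)) * (r2 * (1 - fst (snd (x t))) + a21 * fst (x t))) (at t within {0..})"
    and "((\<lambda>t. snd (snd (x t))) has_real_derivative
           snd (snd (x t)) * (a31 * fst (x t) - mu)) (at t within {0..})"
  using has_vector_derivative_components[of x "F (x t)" t "{0..}"] assms
  by (auto simp: ode_solution_def field_def case_prod_beta algebra_simps)

end

subsection \<open>Global solutions in the nonnegative orthant\<close>

definition clip :: "real \<Rightarrow> real \<Rightarrow> real" where
  "clip B x = max 0 (min B x)"

lemma clip_lipschitz: "1-lipschitz_on UNIV (clip B)"
  by (rule lipschitz_onI) (auto simp: clip_def dist_real_def max_def min_def)

lemma clip_bounds: "0 \<le> B \<Longrightarrow> 0 \<le> clip B x \<and> clip B x \<le> B"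
  by (auto simp: clip_def)

lemma clip_eq_self: "0 \<le> x \<Longrightarrow> x \<le> B \<Longrightarrow> clip B x = x"
  by (auto simp: clip_def)

lemma lipschitz_on_mult_bounded:
  fixes f g :: "'a::metric_space \<Rightarrow> real"
  assumes f: "L-lipschitz_on U f" and g: "M-lipschitz_on U g"
    and "\<And>x. x \<in> U \<Longrightarrow> \<bar>f x\<bar> \<le> B" and "\<And>x. x \<in> U \<Longrightarrow> \<bar>g x\<bar> \<le> B" and "B \<ge> 0"
  shows "(B * (L + M))-lipschitz_on U (\<lambda>x. f x * g x)"
proof (rule lipschitz_onI)
  fix x y assume "x \<in> U" "y \<in> U"
  have "f x * g x - f y * g y = f x * (g x - g y) + g y * (f x - f y)" by (simp add: algebra_simps)
  then have "dist (f x * g x) (f y * g y) \<le> \<bar>f x\<bar> * dist (g x) (g y) + \<bar>g y\<bar> * dist (f x) (f y)"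
    by (simp add: dist_real_def abs_mult[symmetric] abs_triangle_ineq)
  also have "\<dots> \<le> B * (M * dist x y) + B * (L * dist x y)"
    using assms \<open>x \<in> U\<close> \<open>y \<in> U\<close> lipschitz_onD[OF f] lipschitz_onD[OF g]
    by (intro add_mono mult_mono) auto
  finally show "dist (f x * g x) (f y * g y) \<le> B * (L + M) * dist x y" by (simp add: algebra_simps)
qed (use assms lipschitz_on_nonneg[OF f] lipschitz_on_nonneg[OF g] in simp)

context three_species
begin

text \<open>Clipping each coordinate to a box makes the field globally Lipschitz; the box is then shown
  to be invariant, so that the clipped solutions solve the original system.\<close>

definition v_max :: real where
  "v_max = 1 + a21 / r2"

definition clipped_field :: "real \<Rightarrow> state \<Rightarrow> state" where
  "clipped_field W = (\<lambda>(u, v, w). F (clip 1 u, clip v_max v, clip W w))"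

lemma v_max_ge_1: "v_max \<ge> 1"
  using pos by (simp add: v_max_def)

lemma clipped_field_lipschitz:
  assumes "W \<ge> 0"
  obtains L where "L-lipschitz_on UNIV (clipped_field W)"
proof -
  define B where "B = max 1 (max v_max W)"
  define cu where "cu z = clip 1 (fst z)" for z :: state
  define cv where "cv z = clip v_max (fst (snd z))" for z :: state
  define cw where "cw z = clip W (snd (snd z))" for z :: state
  have proj: "1-lipschitz_on UNIV (fst :: state \<Rightarrow> real)"
    "1-lipschitz_on UNIV (\<lambda>z :: state. fst (snd z))" "1-lipschitz_on UNIV (\<lambda>z :: state. snd (snd z))"
    using dist_fst_le dist_snd_le order.trans[OF dist_fst_le dist_snd_le] order.trans[OF dist_snd_le dist_snd_le]
    by (auto intro!: lipschitz_onI)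
  have lip: "1-lipschitz_on UNIV cu" "1-lipschitz_on UNIV cv" "1-lipschitz_on UNIV cw"
    unfolding cu_def cv_def cw_def
    using lipschitz_on_compose2[OF proj(1) lipschitz_on_subset[OF clip_lipschitz]]
      lipschitz_on_compose2[OF proj(2) lipschitz_on_subset[OF clip_lipschitz]]
      lipschitz_on_compose2[OF proj(3) lipschitz_on_subset[OF clip_lipschitz]] by auto
  have bound: "\<bar>cu z\<bar> \<le> B" "\<bar>cv z\<bar> \<le> B" "\<bar>cw z\<bar> \<le> B" for z
    using clip_bounds[of 1 "fst z"] clip_bounds[of v_max "fst (snd z)"] clip_bounds[OF assms, of "snd (snd z)"]
      v_max_ge_1 unfolding cu_def cv_def cw_def B_def by auto
  have field_eq: "clipped_field W = (\<lambda>z. (r1 * cu z - r1 * (cu z * cu z) - a12 * (cu z * cv z) - a13 * (cu z * cw z),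
      r2 * cv z - r2 * (cv z * cv z) + a21 * (cu z * cv z), (- mu) * cw z + a31 * (cu z * cw z)))"
    by (auto simp: clipped_field_def field_def cu_def cv_def cw_def algebra_simps fun_eq_iff)
  have "B \<ge> 0" unfolding B_def by simp
  have "\<exists>L. L-lipschitz_on UNIV (clipped_field W)"
    unfolding field_eq
    by (rule exI, (rule lipschitz_on_Pair lipschitz_on_add lipschitz_on_diff lipschitz_on_cmult_real
        lipschitz_on_mult_bounded lip bound \<open>B \<ge> 0\<close>)+)
  then show ?thesis using that by blast
qed

end

locale clipped_trajectory = three_species +
  fixes W :: real and Y :: "real \<Rightarrow> state"
  assumes Y': "\<And>t. t \<ge> 0 \<Longrightarrow> (Y has_vector_derivative clipped_field W (Y t)) (at t within {0..})"
    and Y0: "Y 0 \<in> orthant" "fst (Y 0) \<le> 1" "fst (snd (Y 0)) \<le> v_max"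
    and W_large: "a31 * fst (Y 0) + a13 * snd (snd (Y 0)) \<le> a13 * W" "a31 + a31 * r1 / (4 * mu) \<le> a13 * W"
begin

definition u :: "real \<Rightarrow> real" where "u t = fst (Y t)"
definition v :: "real \<Rightarrow> real" where "v t = fst (snd (Y t))"
definition w :: "real \<Rightarrow> real" where "w t = snd (snd (Y t))"

lemma Y_eq: "Y t = (u t, v t, w t)"
  by (simp add: u_def v_def w_def)

lemma W_pos: "W > 0"
proof -
  have "a31 + a31 * r1 / (4 * mu) > 0" using pos by (simp add: add_pos_nonneg)
  then have "a13 * W > 0" using W_large(2) by linarith
  then show ?thesis using pos by (simp add: zero_less_mult_iff)
qed

lemma clipped_derivs:
  assumes "t \<ge> 0"
  shows "(u has_real_derivative
           clip 1 (u t) * (r1 * (1 - clip 1 (u t)) - a12 * clip v_max (v t) - a13 * clip W (w t))) (at t within {0..})"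
    and "(v has_real_derivative clip v_max (v t) * (r2 * (1 - clip v_max (v t)) + a21 * clip 1 (u t))) (at t within {0..})"
    and "(w has_real_derivative clip W (w t) * (a31 * clip 1 (u t) - mu)) (at t within {0..})"
  using has_vector_derivative_components[OF Y'[OF assms]]
  by (simp_all add: Y_eq clipped_field_def field_def algebra_simps flip: u_def[abs_def] v_def[abs_def] w_def[abs_def])

lemma clipped_trajectory_nonneg:
  assumes "t \<ge> 0"
  shows "u t \<ge> 0" and "v t \<ge> 0" and "w t \<ge> 0"
proof -
  have init: "u 0 \<ge> 0" "v 0 \<ge> 0" "w 0 \<ge> 0" using Y0(1) by (auto simp: orthant_def Y_eq)
  \<comment> \<open>below zero a clipped coordinate is 0, so the coordinate is frozen\<close>
  have "- u t \<le> max (- u 0) 0"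
    by (rule le_max_if_deriv_nonpos_above[OF DERIV_minus[OF clipped_derivs(1)] _ assms])
      (auto simp: clip_def)
  then show "u t \<ge> 0" using init by simp
  have "- v t \<le> max (- v 0) 0"
    by (rule le_max_if_deriv_nonpos_above[OF DERIV_minus[OF clipped_derivs(2)] _ assms])
      (auto simp: clip_def)
  then show "v t \<ge> 0" using init by simp
  have "- w t \<le> max (- w 0) 0"
    by (rule le_max_if_deriv_nonpos_above[OF DERIV_minus[OF clipped_derivs(3)] _ assms])
      (auto simp: clip_def)
  then show "w t \<ge> 0" using init by simp
qed

lemma clipped_trajectory_u_le_1:
  assumes "t \<ge> 0"
  shows "u t \<le> 1"
proof -
  have "u t \<le> max (u 0) 1"
  proof (rule le_max_if_deriv_nonpos_above[OF clipped_derivs(1) _ assms])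
    fix s :: real assume "0 \<le> s" "1 < u s"
    then have "clip 1 (u s) = 1" by (simp add: clip_def)
    moreover have "a12 * clip v_max (v s) \<ge> 0" "a13 * clip W (w s) \<ge> 0"
      using clip_bounds[of v_max] clip_bounds[of W] v_max_ge_1 W_pos pos by simp_all
    ultimately show "clip 1 (u s) * (r1 * (1 - clip 1 (u s)) - a12 * clip v_max (v s) - a13 * clip W (w s)) \<le> 0"
      by simp
  qed
  then show ?thesis using Y0(2) by (simp add: Y_eq)
qed

lemma clipped_trajectory_v_le_v_max:
  assumes "t \<ge> 0"
  shows "v t \<le> v_max"
proof -
  have "v t \<le> max (v 0) v_max"
  proof (rule le_max_if_deriv_nonpos_above[OF clipped_derivs(2) _ assms])
    fix s :: real assume "0 \<le> s" "v_max < v s"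
    then have clip_v: "clip v_max (v s) = v_max" using v_max_ge_1 by (simp add: clip_def)
    have "r2 * (1 - v_max) + a21 * clip 1 (u s) \<le> r2 * (1 - v_max) + a21"
      using clip_bounds[of 1 "u s"] pos by simp
    also have "\<dots> = 0" using pos by (simp add: v_max_def field_simps)
    finally show "clip v_max (v s) * (r2 * (1 - clip v_max (v s)) + a21 * clip 1 (u s)) \<le> 0"
      unfolding clip_v using v_max_ge_1 by (simp add: mult_nonneg_nonpos)
  qed
  then show ?thesis using Y0(3) by (simp add: Y_eq)
qed

lemma clipped_trajectory_w_le_W:
  assumes "t \<ge> 0"
  shows "w t \<le> W"
proof -
  define S where "S t = a31 * u t + a13 * w t" for t
  have clip_uv: "clip 1 (u t) = u t" "clip v_max (v t) = v t" if "t \<ge> 0" for t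
    using clip_eq_self clipped_trajectory_nonneg clipped_trajectory_u_le_1 clipped_trajectory_v_le_v_max that
    by auto
  have S': "(S has_real_derivative a31 * r1 * (u t * (1 - u t)) - a31 * a12 * (u t * v t) - mu * (a13 * clip W (w t)))
      (at t within {0..})" if "t \<ge> 0" for t
    unfolding S_def[abs_def] using clipped_derivs[OF that]
    by (auto intro!: derivative_eq_intros simp: clip_uv[OF that] algebra_simps)
  \<comment> \<open>the weighted sum \<open>a31 u + a13 w\<close> decreases as soon as it exceeds \<open>a13 W\<close>\<close>
  have "S t \<le> max (S 0) (a13 * W)"
  proof (rule le_max_if_deriv_nonpos_above[OF S' _ assms])
    fix s :: real assume s: "0 \<le> s" "a13 * W < S s"
    have "a13 * clip W (w s) \<ge> a13 * W - a31"
    proof (cases "w s \<le> W")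
      case True
      then have "clip W (w s) = w s" using clip_eq_self clipped_trajectory_nonneg(3)[OF s(1)] by auto
      moreover have "a31 * u s \<le> a31" using clipped_trajectory_u_le_1[OF s(1)] pos by simp
      ultimately show ?thesis using s unfolding S_def by simp
    next
      case False
      then show ?thesis using W_pos pos by (simp add: clip_def)
    qed
    then have "mu * (a13 * W - a31) \<le> mu * (a13 * clip W (w s))" using pos by simp
    moreover have "mu * (a13 * W - a31) \<ge> a31 * r1 * (1 / 4)"
    proof -
      have "mu * (a31 * r1 / (4 * mu)) \<le> mu * (a13 * W - a31)"
        using W_large(2) pos by (intro mult_left_mono) auto
      then show ?thesis using pos by simp
    qed
    moreover have "a31 * r1 * (u s * (1 - u s)) \<le> a31 * r1 * (1 / 4)"
      using zero_le_power2[of "u s - 1 / 2"] pos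
      by (intro mult_left_mono) (auto simp: power2_eq_square algebra_simps)
    moreover have "a31 * a12 * (u s * v s) \<ge> 0" using clipped_trajectory_nonneg[OF s(1)] pos by simp
    ultimately show "a31 * r1 * (u s * (1 - u s)) - a31 * a12 * (u s * v s) - mu * (a13 * clip W (w s)) \<le> 0"
      by linarith
  qed
  moreover have "S 0 \<le> a13 * W" using W_large(1) by (simp add: S_def Y_eq)
  moreover have "a31 * u t \<ge> 0" using clipped_trajectory_nonneg[OF assms] pos by simp
  ultimately have "a13 * w t \<le> a13 * W" by (simp add: S_def)
  then show ?thesis using pos by simp
qed

lemma clipped_trajectory_in_orthant: "t \<ge> 0 \<Longrightarrow> Y t \<in> orthant"
  using clipped_trajectory_nonneg by (simp add: orthant_def Y_eq)

lemma clipped_trajectory_ode_solution: "ode_solution F Y"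
proof -
  have "clipped_field W (Y t) = F (Y t)" if "t \<ge> 0" for t
    using clip_eq_self clipped_trajectory_nonneg[OF that] clipped_trajectory_u_le_1[OF that]
      clipped_trajectory_v_le_v_max[OF that] clipped_trajectory_w_le_W[OF that]
    by (simp add: clipped_field_def Y_eq)
  then show ?thesis using Y' by (simp add: ode_solution_def)
qed

end

context three_species
begin

lemma ode_solution_exists:
  assumes "0 \<le> u0" "u0 \<le> 1" "0 \<le> v0" "v0 \<le> v_max" "0 \<le> w0"
  obtains x where "ode_solution F x" "x 0 = (u0, v0, w0)" "\<And>t. t \<ge> 0 \<Longrightarrow> x t \<in> orthant"
proof -
  define W where "W = max (a31 * u0 + a13 * w0) (a31 + a31 * r1 / (4 * mu)) / a13"
  have W: "a31 * u0 + a13 * w0 \<le> a13 * W" "a31 + a31 * r1 / (4 * mu) \<le> a13 * W"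
    using pos by (simp_all add: W_def)
  have "a31 + a31 * r1 / (4 * mu) > 0" using pos by (simp add: add_pos_nonneg)
  then have "W \<ge> 0" using pos by (simp add: W_def le_max_iff_disj)
  then obtain L where "L-lipschitz_on UNIV (clipped_field W)" by (rule clipped_field_lipschitz)
  then obtain Y where "Y 0 = (u0, v0, w0)"
    and "\<And>t. t \<ge> 0 \<Longrightarrow> (Y has_vector_derivative clipped_field W (Y t)) (at t within {0..})"
    using lipschitz_ode_solution_exists[where ?x0.0="(u0, v0, w0)"] by blast
  then interpret clipped_trajectory r1 r2 a12 a13 a21 a31 mu W Y
    using assms W by unfold_locales (auto simp: orthant_def)
  show ?thesis
    by (rule that[OF clipped_trajectory_ode_solution \<open>Y 0 = (u0, v0, w0)\<close> clipped_trajectory_in_orthant])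
qed

subsection \<open>A Volterra-type Lyapunov function\<close>

text \<open>An equilibrium \<open>(p, q, s)\<close> with \<open>q > 0\<close> at which the per-capita growth rates of \<open>u\<close> and \<open>w\<close>
  vanish if the species is present and are nonpositive if it is absent, so that it cannot invade.\<close>
definition saturated :: "real \<Rightarrow> real \<Rightarrow> real \<Rightarrow> bool" where
  "saturated p q s \<longleftrightarrow> p \<ge> 0 \<and> q > 0 \<and> s \<ge> 0 \<and> r2 * (1 - q) + a21 * p = 0
    \<and> r1 * (1 - p) - a12 * q - a13 * s \<le> 0 \<and> (p > 0 \<longrightarrow> r1 * (1 - p) - a12 * q - a13 * s = 0)
    \<and> a31 * p - mu \<le> 0 \<and> (s > 0 \<longrightarrow> a31 * p - mu = 0)"

definition in_volterra_dom :: "real \<Rightarrow> real \<Rightarrow> real \<Rightarrow> state \<Rightarrow> bool" where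
  "in_volterra_dom p q s z \<longleftrightarrow>
     volterra_dom p (fst z) \<and> volterra_dom q (fst (snd z)) \<and> volterra_dom s (snd (snd z))"

text \<open>The weights \<open>a12 / a21\<close> and \<open>a13 / a31\<close> make the interaction terms cancel in the derivative.\<close>
definition lyapunov :: "real \<Rightarrow> real \<Rightarrow> real \<Rightarrow> state \<Rightarrow> real" where
  "lyapunov p q s z = volterra p (fst z) + a12 / a21 * volterra q (fst (snd z))
     + a13 / a31 * volterra s (snd (snd z))"

definition lyapunov_rate :: "real \<Rightarrow> real \<Rightarrow> real \<Rightarrow> state \<Rightarrow> real" where
  "lyapunov_rate p q s z = (fst z - p) * (r1 * (1 - fst z) - a12 * fst (snd z) - a13 * snd (snd z))
     + a12 / a21 * ((fst (snd z) - q) * (r2 * (1 - fst (snd z)) + a21 * fst z))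
     + a13 / a31 * ((snd (snd z) - s) * (a31 * fst z - mu))"

lemma ode_solution_continuous:
  assumes "ode_solution F x"
  shows "continuous_on {0..} x"
  using assms has_vector_derivative_continuous
  unfolding ode_solution_def continuous_on_eq_continuous_within by blast

lemma ode_solution_in_volterra_dom:
  assumes sol: "ode_solution F x" and "in_volterra_dom p q s (x 0)" and "t \<ge> 0"
  shows "in_volterra_dom p q s (x t)"
proof -
  have "continuous_on {0..} x" by (rule ode_solution_continuous[OF sol])
  then have cont: "continuous_on {0..} (\<lambda>t. fst (x t))" "continuous_on {0..} (\<lambda>t. fst (snd (x t)))"
    "continuous_on {0..} (\<lambda>t. snd (snd (x t)))"
    by (auto intro!: continuous_intros)
  \<comment> \<open>each coordinate solves a linear equation \<open>y' = g y\<close>, so its sign is that of its initial value\<close>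
  have "fst (x t) = fst (x 0) * exp (integral {0..t} (\<lambda>t. r1 * (1 - fst (x t)) - a12 * fst (snd (x t)) - a13 * snd (snd (x t))))"
    by (rule linear_deriv_imp_exp_integral[OF ode_solution_derivs(1)[OF sol]])
      (use cont \<open>t \<ge> 0\<close> in \<open>auto intro!: continuous_intros\<close>)
  moreover have "fst (snd (x t)) = fst (snd (x 0)) * exp (integral {0..t} (\<lambda>t. r2 * (1 - fst (snd (x t))) + a21 * fst (x t)))"
    by (rule linear_deriv_imp_exp_integral[OF ode_solution_derivs(2)[OF sol]])
      (use cont \<open>t \<ge> 0\<close> in \<open>auto intro!: continuous_intros\<close>)
  moreover have "snd (snd (x t)) = snd (snd (x 0)) * exp (integral {0..t} (\<lambda>t. a31 * fst (x t) - mu))"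
    by (rule linear_deriv_imp_exp_integral[OF ode_solution_derivs(3)[OF sol]])
      (use cont \<open>t \<ge> 0\<close> in \<open>auto intro!: continuous_intros\<close>)
  ultimately show ?thesis
    using assms(2) by (simp add: in_volterra_dom_def volterra_dom_def zero_less_mult_iff)
qed

lemma lyapunov_has_derivative:
  assumes "saturated p q s" and sol: "ode_solution F x" and "in_volterra_dom p q s (x 0)" and "t \<ge> 0"
  shows "((\<lambda>t. lyapunov p q s (x t)) has_real_derivative lyapunov_rate p q s (x t)) (at t within {0..})"
proof -
  have dom: "in_volterra_dom p q s (x t)" by (rule ode_solution_in_volterra_dom[OF sol assms(3,4)])
  have "p \<ge> 0" "q \<ge> 0" "s \<ge> 0" using assms(1) by (auto simp: saturated_def)
  note derivs = ode_solution_derivs[OF sol \<open>t \<ge> 0\<close>]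
  show ?thesis
    unfolding lyapunov_def[abs_def] lyapunov_rate_def
    using dom unfolding in_volterra_dom_def
    by (intro DERIV_add DERIV_cmult has_real_derivative_volterra[OF _ derivs(1)]
        has_real_derivative_volterra[OF _ derivs(2)] has_real_derivative_volterra[OF _ derivs(3)])
      (use \<open>p \<ge> 0\<close> \<open>q \<ge> 0\<close> \<open>s \<ge> 0\<close> in auto)
qed

lemma saturated_w_term_nonpos:
  assumes "saturated p q s" and "in_volterra_dom p q s z"
  shows "a13 / a31 * ((snd (snd z) - s) * (a31 * p - mu)) \<le> 0"
proof (cases "s > 0")
  case False
  then have "s = 0" using assms(1) by (simp add: saturated_def)
  then have "(snd (snd z) - s) * (a31 * p - mu) \<le> 0"
    using assms by (auto simp: saturated_def in_volterra_dom_def volterra_dom_def mult_nonneg_nonpos)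
  then show ?thesis using mult_nonneg_nonpos[of "a13 / a31"] pos by simp
qed (use assms(1) in \<open>simp add: saturated_def\<close>)

lemma lyapunov_rate_le:
  assumes sat: "saturated p q s" and dom: "in_volterra_dom p q s z"
  shows "lyapunov_rate p q s z \<le> - r1 * (fst z - p)\<^sup>2 - a12 / a21 * r2 * (fst (snd z) - q)\<^sup>2
           + a13 / a31 * ((snd (snd z) - s) * (a31 * p - mu))"
proof -
  obtain u v w where z: "z = (u, v, w)" by (cases z)
  have "lyapunov_rate p q s z = - r1 * (u - p)\<^sup>2 - a12 / a21 * r2 * (v - q)\<^sup>2
      + (u - p) * (r1 * (1 - p) - a12 * q - a13 * s) + a12 / a21 * ((v - q) * (r2 * (1 - q) + a21 * p))
      + a13 / a31 * ((w - s) * (a31 * p - mu))"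
    using pos by (simp add: lyapunov_rate_def z field_simps power2_eq_square)
  moreover have "(u - p) * (r1 * (1 - p) - a12 * q - a13 * s) \<le> 0"
  proof (cases "p > 0")
    case False
    then have "p = 0" "u \<ge> 0" using sat dom by (auto simp: saturated_def in_volterra_dom_def volterra_dom_def z)
    then show ?thesis using sat by (simp add: saturated_def mult_nonneg_nonpos)
  qed (use sat in \<open>simp add: saturated_def\<close>)
  moreover have "r2 * (1 - q) + a21 * p = 0" using sat by (simp add: saturated_def)
  ultimately show ?thesis by (simp add: z)
qed

lemma lyapunov_rate_nonpos:
  assumes "saturated p q s" and "in_volterra_dom p q s z"
  shows "lyapunov_rate p q s z \<le> 0"
proof -
  have "r1 * (fst z - p)\<^sup>2 \<ge> 0" "a12 / a21 * r2 * (fst (snd z) - q)\<^sup>2 \<ge> 0" using pos by simp_all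
  then show ?thesis
    using lyapunov_rate_le[OF assms] saturated_w_term_nonpos[OF assms] by linarith
qed

lemma lyapunov_nonneg:
  assumes "saturated p q s" and "in_volterra_dom p q s z"
  shows "volterra p (fst z) \<ge> 0" and "volterra q (fst (snd z)) \<ge> 0" and "volterra s (snd (snd z)) \<ge> 0"
    and "lyapunov p q s z \<ge> 0"
proof -
  show *: "volterra p (fst z) \<ge> 0" "volterra q (fst (snd z)) \<ge> 0" "volterra s (snd (snd z)) \<ge> 0"
    using assms volterra_nonneg by (auto simp: saturated_def in_volterra_dom_def)
  then show "lyapunov p q s z \<ge> 0" using pos by (simp add: lyapunov_def)
qed

lemma lyapunov_antimono:
  assumes "saturated p q s" and sol: "ode_solution F x" and dom: "in_volterra_dom p q s (x 0)"
    and "0 \<le> t1" "t1 \<le> t2"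
  shows "lyapunov p q s (x t2) \<le> lyapunov p q s (x t1)"
  using deriv_le_imp_increment_le[OF lyapunov_has_derivative[OF assms(1-3)] assms(4,5), of 0]
    lyapunov_rate_nonpos[OF assms(1) ode_solution_in_volterra_dom[OF sol dom]] assms(4)
  by simp

lemma lyapunov_small_imp_near:
  assumes sat: "saturated p q s" and "\<epsilon> > 0"
  obtains m where "m > 0" and "\<And>z. in_volterra_dom p q s z \<Longrightarrow> lyapunov p q s z < m \<Longrightarrow> dist z (p, q, s) < \<epsilon>"
proof -
  have "p \<ge> 0" "q \<ge> 0" "s \<ge> 0" using sat by (auto simp: saturated_def)
  moreover have "\<epsilon> / 3 > 0" using \<open>\<epsilon> > 0\<close> by simp
  ultimately obtain m1 m2 m3 where m: "m1 > 0" "m2 > 0" "m3 > 0"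
    and near1: "\<And>y. volterra_dom p y \<Longrightarrow> volterra p y < m1 \<Longrightarrow> \<bar>y - p\<bar> < \<epsilon> / 3"
    and near2: "\<And>y. volterra_dom q y \<Longrightarrow> volterra q y < m2 \<Longrightarrow> \<bar>y - q\<bar> < \<epsilon> / 3"
    and near3: "\<And>y. volterra_dom s y \<Longrightarrow> volterra s y < m3 \<Longrightarrow> \<bar>y - s\<bar> < \<epsilon> / 3"
    by (metis volterra_small_imp_near)
  define m where "m = min m1 (min (a12 / a21 * m2) (a13 / a31 * m3))"
  have "m > 0" using m pos by (simp add: m_def)
  moreover have "dist z (p, q, s) < \<epsilon>" if z: "in_volterra_dom p q s z" "lyapunov p q s z < m" for z
  proof -
    obtain u v w where z_eq: "z = (u, v, w)" by (cases z)
    have "volterra p u \<ge> 0" "a12 / a21 * volterra q v \<ge> 0" "a13 / a31 * volterra s w \<ge> 0"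
      using lyapunov_nonneg[OF sat z(1)] pos by (simp_all add: z_eq)
    moreover have "lyapunov p q s z = volterra p u + a12 / a21 * volterra q v + a13 / a31 * volterra s w"
      by (simp add: lyapunov_def z_eq)
    moreover have "m \<le> m1" "m \<le> a12 / a21 * m2" "m \<le> a13 / a31 * m3" by (simp_all add: m_def)
    ultimately have "volterra p u < m1" "a12 / a21 * volterra q v < a12 / a21 * m2"
      "a13 / a31 * volterra s w < a13 / a31 * m3"
      using z(2) by linarith+
    then have "volterra p u < m1" "volterra q v < m2" "volterra s w < m3"
      using pos by (metis mult_less_cancel_left_pos divide_pos_pos)+
    then have "\<bar>u - p\<bar> < \<epsilon> / 3" "\<bar>v - q\<bar> < \<epsilon> / 3" "\<bar>w - s\<bar> < \<epsilon> / 3"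
      using near1 near2 near3 z(1) pos by (auto simp: in_volterra_dom_def z_eq)
    moreover have "dist z (p, q, s) \<le> \<bar>u - p\<bar> + \<bar>v - q\<bar> + \<bar>w - s\<bar>"
      using norm_Pair_le[of "u - p" "(v - q, w - s)"] norm_Pair_le[of "v - q" "w - s"]
      by (simp add: z_eq dist_norm)
    ultimately show ?thesis by linarith
  qed
  ultimately show ?thesis using that by blast
qed

lemma isCont_lyapunov:
  assumes "saturated p q s"
  shows "isCont (lyapunov p q s) (p, q, s)"
proof -
  have "p \<ge> 0" "q \<ge> 0" "s \<ge> 0" using assms by (auto simp: saturated_def)
  have "isCont (\<lambda>z. volterra p (fst z)) (p, q, s)"
    by (rule isCont_o2[where f=fst]) (auto intro: isCont_volterra[OF \<open>p \<ge> 0\<close>])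
  moreover have "isCont (\<lambda>z. volterra q (fst (snd z))) (p, q, s)"
    by (rule isCont_o2[where f="\<lambda>z. fst (snd z)"]) (auto intro!: continuous_intros isCont_volterra[OF \<open>q \<ge> 0\<close>])
  moreover have "isCont (\<lambda>z. volterra s (snd (snd z))) (p, q, s)"
    by (rule isCont_o2[where f="\<lambda>z. snd (snd z)"]) (auto intro!: continuous_intros isCont_volterra[OF \<open>s \<ge> 0\<close>])
  ultimately show ?thesis unfolding lyapunov_def[abs_def] by (intro continuous_intros)
qed

lemma near_saturated_in_volterra_dom:
  assumes "saturated p q s"
  obtains \<eta> where "\<eta> > 0" and "\<And>z. z \<in> orthant \<Longrightarrow> dist z (p, q, s) < \<eta> \<Longrightarrow> in_volterra_dom p q s z"
proof
  define \<eta> where "\<eta> = min (if p > 0 then p else 1) (min q (if s > 0 then s else 1))"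
  show "\<eta> > 0" using assms by (simp add: \<eta>_def saturated_def)
  fix z assume "z \<in> orthant" "dist z (p, q, s) < \<eta>"
  moreover have "\<bar>fst z - p\<bar> \<le> dist z (p, q, s)" "\<bar>fst (snd z) - q\<bar> \<le> dist z (p, q, s)"
    "\<bar>snd (snd z) - s\<bar> \<le> dist z (p, q, s)"
    using dist_fst_le[of z "(p, q, s)"] dist_fst_le[of "snd z" "(q, s)"] dist_snd_le[of z "(p, q, s)"]
      dist_snd_le[of "snd z" "(q, s)"] by (auto simp: dist_real_def)
  ultimately show "in_volterra_dom p q s z"
    by (auto simp: \<eta>_def in_volterra_dom_def volterra_dom_def orthant_def split: if_splits)
qed

lemma saturated_stable:
  assumes sat: "saturated p q s"
  shows "stable_in F orthant (p, q, s)"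
  unfolding stable_in_def
proof (intro allI impI)
  fix \<epsilon> :: real assume "\<epsilon> > 0"
  obtain m where "m > 0" and near: "\<And>z. in_volterra_dom p q s z \<Longrightarrow> lyapunov p q s z < m \<Longrightarrow> dist z (p, q, s) < \<epsilon>"
    using lyapunov_small_imp_near[OF sat \<open>\<epsilon> > 0\<close>] by blast
  obtain \<delta>1 where "\<delta>1 > 0" and small: "\<And>z. dist z (p, q, s) < \<delta>1 \<Longrightarrow> lyapunov p q s z < m"
    using isCont_lyapunov[OF sat] \<open>m > 0\<close> unfolding continuous_at_eps_delta
    by (force simp: lyapunov_def dist_real_def)
  obtain \<eta> where "\<eta> > 0" and dom: "\<And>z. z \<in> orthant \<Longrightarrow> dist z (p, q, s) < \<eta> \<Longrightarrow> in_volterra_dom p q s z"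
    using near_saturated_in_volterra_dom[OF sat] by blast
  have "\<forall>t\<ge>0. dist (x t) (p, q, s) < \<epsilon>"
    if x: "ode_solution F x" "x 0 \<in> orthant" "dist (x 0) (p, q, s) < min \<delta>1 \<eta>" for x
  proof (intro allI impI)
    fix t :: real assume "t \<ge> 0"
    have "in_volterra_dom p q s (x 0)" using dom x by simp
    then show "dist (x t) (p, q, s) < \<epsilon>"
      using lyapunov_antimono[OF sat x(1), of 0 t] small[of "x 0"] x(3) \<open>t \<ge> 0\<close>
        near[OF ode_solution_in_volterra_dom[OF x(1)]] by fastforce
  qed
  then show "\<exists>\<delta>>0. \<forall>x. ode_solution F x \<and> x 0 \<in> orthant \<and> dist (x 0) (p, q, s) < \<delta> \<longrightarrow>
      (\<forall>t\<ge>0. dist (x t) (p, q, s) < \<epsilon>)"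
    using \<open>\<delta>1 > 0\<close> \<open>\<eta> > 0\<close> by (intro exI[of _ "min \<delta>1 \<eta>"]) auto
qed

end

subsection \<open>Convergence to saturated equilibria\<close>

locale saturated_trajectory = three_species +
  fixes p q s :: real and x :: "real \<Rightarrow> state"
  assumes saturated: "saturated p q s" and sol: "ode_solution F x"
    and dom0: "in_volterra_dom p q s (x 0)"
begin

definition u :: "real \<Rightarrow> real" where "u t = fst (x t)"
definition v :: "real \<Rightarrow> real" where "v t = fst (snd (x t))"
definition w :: "real \<Rightarrow> real" where "w t = snd (snd (x t))"

lemma in_dom: "t \<ge> 0 \<Longrightarrow> in_volterra_dom p q s (x t)"
  using ode_solution_in_volterra_dom[OF sol dom0] .

lemma coordinates_nonneg: "t \<ge> 0 \<Longrightarrow> u t \<ge> 0 \<and> v t \<ge> 0 \<and> w t \<ge> 0"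
  using in_dom by (simp add: in_volterra_dom_def volterra_dom_def u_def v_def w_def)

lemma coordinate_derivs:
  assumes "t \<ge> 0"
  shows "(u has_real_derivative u t * (r1 * (1 - u t) - a12 * v t - a13 * w t)) (at t within {0..})"
    and "(v has_real_derivative v t * (r2 * (1 - v t) + a21 * u t)) (at t within {0..})"
    and "(w has_real_derivative w t * (a31 * u t - mu)) (at t within {0..})"
  using ode_solution_derivs[OF sol assms] by (simp_all add: u_def[abs_def] v_def[abs_def] w_def[abs_def])

lemma lyapunov_decreasing: "t \<ge> 0 \<Longrightarrow> lyapunov p q s (x t) \<le> lyapunov p q s (x 0)"
  using lyapunov_antimono[OF saturated sol dom0, of 0 t] by simp

lemma coordinates_bounded:
  obtains B where "B \<ge> 0" and "\<And>t. t \<ge> 0 \<Longrightarrow> u t \<le> B \<and> v t \<le> B \<and> w t \<le> B"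
proof -
  define V0 where "V0 = lyapunov p q s (x 0)"
  define Vq where "Vq = a21 / a12 * V0"
  define Vs where "Vs = a31 / a13 * V0"
  have "V0 \<ge> 0" "p \<ge> 0" "q \<ge> 0" "s \<ge> 0"
    using lyapunov_nonneg(4)[OF saturated dom0] saturated by (auto simp: V0_def saturated_def)
  then have "Vq \<ge> 0" "Vs \<ge> 0" using pos by (simp_all add: Vq_def Vs_def)
  \<comment> \<open>every Volterra term is bounded by the initial value of the Lyapunov function\<close>
  have bounds: "u t \<le> 2 * (V0 + p) \<and> v t \<le> 2 * (Vq + q) \<and> w t \<le> 2 * (Vs + s)" if "t \<ge> 0" for t
  proof -
    have terms: "volterra p (u t) \<ge> 0" "volterra q (v t) \<ge> 0" "volterra s (w t) \<ge> 0"
      using lyapunov_nonneg(1-3)[OF saturated in_dom[OF that]] by (simp_all add: u_def v_def w_def)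
    have "volterra p (u t) + a12 / a21 * volterra q (v t) + a13 / a31 * volterra s (w t) \<le> V0"
      using lyapunov_decreasing[OF that] by (simp add: V0_def lyapunov_def u_def v_def w_def)
    moreover have "a12 / a21 * volterra q (v t) \<ge> 0" "a13 / a31 * volterra s (w t) \<ge> 0"
      using terms pos by simp_all
    ultimately have "volterra p (u t) \<le> V0" "a12 / a21 * volterra q (v t) \<le> V0"
      "a13 / a31 * volterra s (w t) \<le> V0"
      using terms by linarith+
    then have "volterra p (u t) \<le> V0" "volterra q (v t) \<le> Vq" "volterra s (w t) \<le> Vs"
      using pos by (simp_all add: Vq_def Vs_def field_simps)
    moreover have "u t \<le> 2 * (volterra p (u t) + p)" "v t \<le> 2 * (volterra q (v t) + q)"
      "w t \<le> 2 * (volterra s (w t) + s)"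
      using le_volterra_bound[OF \<open>p \<ge> 0\<close>] le_volterra_bound[OF \<open>q \<ge> 0\<close>] le_volterra_bound[OF \<open>s \<ge> 0\<close>]
        in_dom[OF that] by (simp_all add: in_volterra_dom_def u_def v_def w_def)
    ultimately show ?thesis by simp
  qed
  show ?thesis
  proof (rule that[of "2 * (V0 + Vq + Vs + p + q + s)"])
    show "2 * (V0 + Vq + Vs + p + q + s) \<ge> 0"
      using \<open>V0 \<ge> 0\<close> \<open>Vq \<ge> 0\<close> \<open>Vs \<ge> 0\<close> \<open>p \<ge> 0\<close> \<open>q \<ge> 0\<close> \<open>s \<ge> 0\<close> by simp
    fix t :: real assume "t \<ge> 0"
    then show "u t \<le> 2 * (V0 + Vq + Vs + p + q + s) \<and> v t \<le> 2 * (V0 + Vq + Vs + p + q + s)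
        \<and> w t \<le> 2 * (V0 + Vq + Vs + p + q + s)"
      using bounds[OF \<open>t \<ge> 0\<close>] \<open>V0 \<ge> 0\<close> \<open>Vq \<ge> 0\<close> \<open>Vs \<ge> 0\<close> \<open>p \<ge> 0\<close> \<open>q \<ge> 0\<close> \<open>s \<ge> 0\<close>
      by (simp add: algebra_simps)
  qed
qed

lemma coordinates_lipschitz:
  obtains K where "K > 0" and "\<And>t1 t2. t1 \<ge> 0 \<Longrightarrow> t2 \<ge> 0 \<Longrightarrow>
    \<bar>u t1 - u t2\<bar> \<le> K * \<bar>t1 - t2\<bar> \<and> \<bar>v t1 - v t2\<bar> \<le> K * \<bar>t1 - t2\<bar> \<and> \<bar>w t1 - w t2\<bar> \<le> K * \<bar>t1 - t2\<bar>"
proof -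
  obtain B where "B \<ge> 0" and B: "\<And>t. t \<ge> 0 \<Longrightarrow> u t \<le> B \<and> v t \<le> B \<and> w t \<le> B"
    using coordinates_bounded by blast
  define C where "C = r1 + r2 + mu + r1 * B + r2 * B + a12 * B + a13 * B + a21 * B + a31 * B"
  define K where "K = B * C + 1"
  have "C \<ge> 0" using pos \<open>B \<ge> 0\<close> by (simp add: C_def)
  then have "K > 0" using mult_nonneg_nonneg[OF \<open>B \<ge> 0\<close> \<open>C \<ge> 0\<close>] by (simp add: K_def)
  have rate_bound: "\<bar>y * g\<bar> \<le> K" if "0 \<le> y" "y \<le> B" "\<bar>g\<bar> \<le> C" for y g
  proof -
    have "\<bar>y * g\<bar> = y * \<bar>g\<bar>" using that by (simp add: abs_mult)
    also have "\<dots> \<le> B * C" using that by (intro mult_mono) auto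
    finally show ?thesis by (simp add: K_def)
  qed
  have deriv_bound: "\<bar>u t * (r1 * (1 - u t) - a12 * v t - a13 * w t)\<bar> \<le> K"
    "\<bar>v t * (r2 * (1 - v t) + a21 * u t)\<bar> \<le> K" "\<bar>w t * (a31 * u t - mu)\<bar> \<le> K" if "t \<ge> 0" for t
  proof -
    have b: "0 \<le> u t" "u t \<le> B" "0 \<le> v t" "v t \<le> B" "0 \<le> w t" "w t \<le> B"
      using coordinates_nonneg[OF that] B[OF that] by auto
    have prod: "r1 * u t \<le> r1 * B" "a12 * v t \<le> a12 * B" "a13 * w t \<le> a13 * B" "r2 * v t \<le> r2 * B"
      "a21 * u t \<le> a21 * B" "a31 * u t \<le> a31 * B"
      "0 \<le> r1 * u t" "0 \<le> a12 * v t" "0 \<le> a13 * w t" "0 \<le> r2 * v t" "0 \<le> a21 * u t" "0 \<le> a31 * u t"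
      using b pos by (simp_all add: mult_left_mono)
    have coef: "0 \<le> r1 * B" "0 \<le> r2 * B" "0 \<le> a12 * B" "0 \<le> a13 * B" "0 \<le> a21 * B" "0 \<le> a31 * B"
      using pos \<open>B \<ge> 0\<close> by simp_all
    have "\<bar>r1 * (1 - u t) - a12 * v t - a13 * w t\<bar> \<le> r1 + r1 * B + a12 * B + a13 * B"
    proof -
      have d: "r1 * (1 - u t) = r1 - r1 * u t" by (simp add: algebra_simps)
      show ?thesis by (rule abs_leI; use d prod(1-3,7-9) pos(1) in linarith)
    qed
    also have "\<dots> \<le> C" using coef pos by (simp add: C_def)
    finally have rate_u: "\<bar>r1 * (1 - u t) - a12 * v t - a13 * w t\<bar> \<le> C" .
    have "\<bar>r2 * (1 - v t) + a21 * u t\<bar> \<le> r2 + r2 * B + a21 * B"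
    proof -
      have d: "r2 * (1 - v t) = r2 - r2 * v t" by (simp add: algebra_simps)
      show ?thesis by (rule abs_leI; use d prod(4,5,10,11) pos(2) in linarith)
    qed
    also have "\<dots> \<le> C" using coef pos by (simp add: C_def)
    finally have rate_v: "\<bar>r2 * (1 - v t) + a21 * u t\<bar> \<le> C" .
    have "\<bar>a31 * u t - mu\<bar> \<le> mu + a31 * B"
      by (rule abs_leI; use prod(6,12) pos(7) in linarith)
    also have "\<dots> \<le> C" using coef pos by (simp add: C_def)
    finally have rate_w: "\<bar>a31 * u t - mu\<bar> \<le> C" .
    show "\<bar>u t * (r1 * (1 - u t) - a12 * v t - a13 * w t)\<bar> \<le> K"
      "\<bar>v t * (r2 * (1 - v t) + a21 * u t)\<bar> \<le> K" "\<bar>w t * (a31 * u t - mu)\<bar> \<le> K"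
      by (rule rate_bound[OF b(1,2) rate_u] rate_bound[OF b(3,4) rate_v] rate_bound[OF b(5,6) rate_w])+
  qed
  show ?thesis
  proof (rule that[OF \<open>K > 0\<close>])
    fix t1 t2 :: real assume t: "t1 \<ge> 0" "t2 \<ge> 0"
    show "\<bar>u t1 - u t2\<bar> \<le> K * \<bar>t1 - t2\<bar> \<and> \<bar>v t1 - v t2\<bar> \<le> K * \<bar>t1 - t2\<bar> \<and> \<bar>w t1 - w t2\<bar> \<le> K * \<bar>t1 - t2\<bar>"
      using abs_deriv_le_imp_lipschitz[OF coordinate_derivs(1) deriv_bound(1) t]
        abs_deriv_le_imp_lipschitz[OF coordinate_derivs(2) deriv_bound(2) t]
        abs_deriv_le_imp_lipschitz[OF coordinate_derivs(3) deriv_bound(3) t] by (intro conjI)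
  qed
qed

lemma lyapunov_rate_bound:
  assumes "t \<ge> 0"
  shows "lyapunov_rate p q s (x t) \<le> - r1 * (u t - p)\<^sup>2 - a12 / a21 * r2 * (v t - q)\<^sup>2
           + a13 / a31 * ((w t - s) * (a31 * p - mu))"
    and "a13 / a31 * ((w t - s) * (a31 * p - mu)) \<le> 0"
  using lyapunov_rate_le[OF saturated in_dom[OF assms]] saturated_w_term_nonpos[OF saturated in_dom[OF assms]]
  by (simp_all add: u_def v_def w_def)

lemma tendsto_of_lyapunov_decay:
  assumes "c > 0" and decay: "\<And>t. t \<ge> 0 \<Longrightarrow> lyapunov_rate p q s (x t) \<le> - c * (y t - a)\<^sup>2"
    and y: "y = u \<or> y = v \<or> y = w"
  shows "(y \<longlongrightarrow> a) at_top"
proof -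
  obtain K where "K > 0" and lip: "\<And>t1 t2. t1 \<ge> 0 \<Longrightarrow> t2 \<ge> 0 \<Longrightarrow>
    \<bar>u t1 - u t2\<bar> \<le> K * \<bar>t1 - t2\<bar> \<and> \<bar>v t1 - v t2\<bar> \<le> K * \<bar>t1 - t2\<bar> \<and> \<bar>w t1 - w t2\<bar> \<le> K * \<bar>t1 - t2\<bar>"
    using coordinates_lipschitz by blast
  show ?thesis
  proof (rule lyapunov_decay_imp_tendsto[OF lyapunov_has_derivative[OF saturated sol dom0] _ decay \<open>c > 0\<close> \<open>K > 0\<close>])
    show "lyapunov p q s (x t) \<ge> 0" if "t \<ge> 0" for t using lyapunov_nonneg(4)[OF saturated in_dom[OF that]] .
    show "\<bar>y t1 - y t2\<bar> \<le> K * \<bar>t1 - t2\<bar>" if "t1 \<ge> 0" "t2 \<ge> 0" for t1 t2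
      using lip[OF that] y by auto
  qed
qed

lemma u_tendsto: "(u \<longlongrightarrow> p) at_top"
proof (rule tendsto_of_lyapunov_decay)
  fix t :: real assume "t \<ge> 0"
  have "a12 / a21 * r2 * (v t - q)\<^sup>2 \<ge> 0" using pos by simp
  then show "lyapunov_rate p q s (x t) \<le> - r1 * (u t - p)\<^sup>2"
    using lyapunov_rate_bound[OF \<open>t \<ge> 0\<close>] by linarith
qed (use pos in auto)

lemma v_tendsto: "(v \<longlongrightarrow> q) at_top"
proof (rule tendsto_of_lyapunov_decay)
  fix t :: real assume "t \<ge> 0"
  have "r1 * (u t - p)\<^sup>2 \<ge> 0" using pos by simp
  then show "lyapunov_rate p q s (x t) \<le> - (a12 / a21 * r2) * (v t - q)\<^sup>2"
    using lyapunov_rate_bound[OF \<open>t \<ge> 0\<close>] by simp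
qed (use pos in auto)

lemma w_tendsto_0:
  assumes "s = 0" and "a31 * p < mu"
  shows "(w \<longlongrightarrow> 0) at_top"
proof -
  obtain B where "B \<ge> 0" and B: "\<And>t. t \<ge> 0 \<Longrightarrow> u t \<le> B \<and> v t \<le> B \<and> w t \<le> B"
    using coordinates_bounded by blast
  define k where "k = a13 / a31 * (mu - a31 * p)"
  have "k > 0" using assms(2) pos by (simp add: k_def)
  \<comment> \<open>the \<open>w\<close>-term of the rate is \<open>- k w \<le> - k w\<^sup>2 / (B + 1)\<close>, since \<open>0 \<le> w \<le> B\<close>\<close>
  show ?thesis
  proof (rule tendsto_of_lyapunov_decay)
    show "k / (B + 1) > 0" using \<open>k > 0\<close> \<open>B \<ge> 0\<close> by simp
    fix t :: real assume "t \<ge> 0"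
    have "w t * w t \<le> (B + 1) * w t" using coordinates_nonneg[OF \<open>t \<ge> 0\<close>] B[OF \<open>t \<ge> 0\<close>] by (intro mult_right_mono) auto
    then have "k / (B + 1) * (w t * w t) \<le> k / (B + 1) * ((B + 1) * w t)"
      using \<open>k > 0\<close> \<open>B \<ge> 0\<close> by (intro mult_left_mono) auto
    then have "k / (B + 1) * (w t - 0)\<^sup>2 \<le> k * w t"
      using \<open>B \<ge> 0\<close> by (simp add: power2_eq_square)
    moreover have "a13 / a31 * ((w t - s) * (a31 * p - mu)) = - k * w t"
      using assms(1) by (simp add: k_def algebra_simps)
    moreover have "r1 * (u t - p)\<^sup>2 \<ge> 0" "a12 / a21 * r2 * (v t - q)\<^sup>2 \<ge> 0" using pos by simp_all
    ultimately show "lyapunov_rate p q s (x t) \<le> - (k / (B + 1)) * (w t - 0)\<^sup>2"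
      using lyapunov_rate_bound(1)[OF \<open>t \<ge> 0\<close>] by linarith
  qed simp
qed

lemma w_tendsto_s:
  assumes "s > 0" and "p > 0"
  shows "(w \<longlongrightarrow> s) at_top"
proof -
  have eq_u: "r1 * (1 - p) - a12 * q - a13 * s = 0" and eq_w: "a31 * p = mu"
    using saturated assms by (auto simp: saturated_def)
  have u_pos: "u t > 0" if "t \<ge> 0" for t
    using in_dom[OF that] \<open>p > 0\<close> by (simp add: in_volterra_dom_def volterra_dom_def u_def)
  obtain B where B: "\<And>t. t \<ge> 0 \<Longrightarrow> u t \<le> B \<and> v t \<le> B \<and> w t \<le> B"
    using coordinates_bounded by blast
  \<comment> \<open>\<open>ln u\<close> converges while its derivative is \<open>- a13 (w - s)\<close> up to a vanishing error\<close>
  show ?thesis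
  proof (rule tendsto_of_convergent_antiderivative[where c=a13])
    show "((\<lambda>t. ln (u t)) has_real_derivative r1 * (1 - u t) - a12 * v t - a13 * w t) (at t within {0..})"
      if "t \<ge> 0" for t
      using DERIV_chain2[OF DERIV_ln_divide[OF u_pos[OF that]] coordinate_derivs(1)[OF that]] u_pos[OF that] by simp
    show "(w has_real_derivative w t * (a31 * u t - mu)) (at t within {0..})" if "t \<ge> 0" for t
      using coordinate_derivs(3)[OF that] .
    show "((\<lambda>t. ln (u t)) \<longlongrightarrow> ln p) at_top" using u_tendsto \<open>p > 0\<close> by (intro tendsto_ln) auto
    have "((\<lambda>t. - r1 * (u t - p) - a12 * (v t - q)) \<longlongrightarrow> - r1 * (p - p) - a12 * (q - q)) at_top"
      by (intro tendsto_intros u_tendsto v_tendsto)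
    moreover have "r1 * (1 - u t) - a12 * v t - a13 * w t + a13 * (w t - s) = - r1 * (u t - p) - a12 * (v t - q)" for t
      using eq_u by (simp add: algebra_simps)
    ultimately show "((\<lambda>t. r1 * (1 - u t) - a12 * v t - a13 * w t + a13 * (w t - s)) \<longlongrightarrow> 0) at_top"
      by simp
    have "((\<lambda>t. a31 * (B + 1) * \<bar>u t - p\<bar>) \<longlongrightarrow> a31 * (B + 1) * \<bar>p - p\<bar>) at_top"
      by (intro tendsto_intros u_tendsto)
    then have bound_null: "((\<lambda>t. a31 * (B + 1) * \<bar>u t - p\<bar>) \<longlongrightarrow> 0) at_top" by simp
    have "\<forall>\<^sub>F t in at_top. norm (w t * (a31 * u t - mu)) \<le> a31 * (B + 1) * \<bar>u t - p\<bar>"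
      using eventually_ge_at_top[of 0]
    proof eventually_elim
      case (elim t)
      have "a31 * u t - mu = a31 * (u t - p)"
        unfolding eq_w[symmetric] by (simp add: algebra_simps)
      then have "norm (w t * (a31 * u t - mu)) = a31 * (\<bar>w t\<bar> * \<bar>u t - p\<bar>)"
        using pos by (simp add: abs_mult)
      also have "\<dots> \<le> a31 * ((B + 1) * \<bar>u t - p\<bar>)"
        using coordinates_nonneg[OF elim] B[OF elim] pos by (intro mult_left_mono mult_right_mono) auto
      finally show ?case by (simp add: algebra_simps)
    qed
    then show "((\<lambda>t. w t * (a31 * u t - mu)) \<longlongrightarrow> 0) at_top"
      using bound_null by (rule Lim_null_comparison)
  qed (use pos in auto)
qed

lemma tendsto_saturated:
  assumes "(s = 0 \<and> a31 * p < mu) \<or> (s > 0 \<and> p > 0)"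
  shows "(x \<longlongrightarrow> (p, q, s)) at_top"
proof -
  from assms have "(w \<longlongrightarrow> s) at_top"
  proof
    assume "s = 0 \<and> a31 * p < mu"
    then show ?thesis using w_tendsto_0 by simp
  next
    assume "s > 0 \<and> p > 0"
    then show ?thesis using w_tendsto_s by simp
  qed
  then have "((\<lambda>t. (u t, v t, w t)) \<longlongrightarrow> (p, q, s)) at_top"
    by (intro tendsto_Pair u_tendsto v_tendsto)
  moreover have "(\<lambda>t. (u t, v t, w t)) = x" by (simp add: u_def v_def w_def)
  ultimately show ?thesis by simp
qed

end

context three_species
begin

lemma saturated_attracts:
  assumes "saturated p q s" and "(s = 0 \<and> a31 * p < mu) \<or> (s > 0 \<and> p > 0)"
    and "ode_solution F x" and "in_volterra_dom p q s (x 0)"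
  shows "(x \<longlongrightarrow> (p, q, s)) at_top"
proof -
  interpret saturated_trajectory r1 r2 a12 a13 a21 a31 mu p q s x
    by (unfold_locales; use pos assms in simp)
  show ?thesis using assms(2) by (rule tendsto_saturated)
qed

lemma saturated_loc_asym_stable:
  assumes sat: "saturated p q s" and "p > 0" and "(s = 0 \<and> a31 * p < mu) \<or> s > 0"
  shows "loc_asym_stable_in F orthant (p, q, s)"
  unfolding loc_asym_stable_in_def
proof (intro conjI saturated_stable[OF sat])
  obtain \<eta> where "\<eta> > 0" and dom: "\<And>z. z \<in> orthant \<Longrightarrow> dist z (p, q, s) < \<eta> \<Longrightarrow> in_volterra_dom p q s z"
    using near_saturated_in_volterra_dom[OF sat] by blast
  have "(x \<longlongrightarrow> (p, q, s)) at_top"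
    if "ode_solution F x" "x 0 \<in> orthant" "dist (x 0) (p, q, s) < \<eta>" for x
    using saturated_attracts[OF sat _ that(1) dom[OF that(2,3)]] assms(2,3) by auto
  then show "\<exists>\<eta>>0. \<forall>x. ode_solution F x \<and> x 0 \<in> orthant \<and> dist (x 0) (p, q, s) < \<eta> \<longrightarrow>
      (x \<longlongrightarrow> (p, q, s)) at_top"
    using \<open>\<eta> > 0\<close> by blast
qed

subsection \<open>Instability of the equilibria without \<open>v\<close>\<close>

lemma v_escapes:
  assumes sol: "ode_solution F x" and orth: "\<And>t. t \<ge> 0 \<Longrightarrow> x t \<in> orthant" and "fst (snd (x 0)) > 0"
  shows "\<exists>t\<ge>0. fst (snd (x t)) \<ge> 1 / 2"
proof (rule ccontr)
  define v where "v t = fst (snd (x t))" for t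
  define d where "d = v 0"
  have "d > 0" using assms(3) by (simp add: d_def v_def)
  assume "\<not> ?thesis"
  then have small: "v t < 1 / 2" if "t \<ge> 0" for t using that by (fastforce simp: v_def not_le)
  \<comment> \<open>while \<open>v < 1/2\<close> its per-capita growth rate is at least \<open>r2 / 2\<close>\<close>
  define h where "h t = v t * exp (- (r2 / 2) * t)" for t
  have h': "(h has_real_derivative v t * exp (- (r2 / 2) * t) * (r2 * (1 / 2 - v t) + a21 * fst (x t)))
      (at t within {0..})" if "t \<ge> 0" for t
    unfolding h_def[abs_def] using ode_solution_derivs(2)[OF sol that]
    by (auto intro!: derivative_eq_intros simp: v_def algebra_simps)
  define T where "T = 1 / (r2 * d)"
  have "T \<ge> 0" using pos \<open>d > 0\<close> by (simp add: T_def)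
  have "h T - h 0 \<ge> 0 * (T - 0)"
  proof (rule deriv_ge_imp_increment_ge[OF h' order_refl \<open>T \<ge> 0\<close>])
    fix t :: real assume "0 < t"
    then have "v t \<ge> 0" "fst (x t) \<ge> 0" "v t < 1 / 2" using orth[of t] small[of t] by (auto simp: orthant_def v_def)
    then show "0 \<le> v t * exp (- (r2 / 2) * t) * (r2 * (1 / 2 - v t) + a21 * fst (x t))"
      using pos by (intro mult_nonneg_nonneg add_nonneg_nonneg) auto
  qed
  then have "h T \<ge> d" by (simp add: h_def d_def)
  have "v T = h T * exp ((r2 / 2) * T)" by (simp add: h_def exp_minus field_simps)
  also have "\<dots> \<ge> d * (1 + (r2 / 2) * T)"
    using \<open>h T \<ge> d\<close> \<open>d > 0\<close> exp_ge_add_one_self[of "(r2 / 2) * T"] pos \<open>T \<ge> 0\<close> by (intro mult_mono) auto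
  also have "d * (1 + (r2 / 2) * T) = d + 1 / 2" using pos \<open>d > 0\<close> by (simp add: T_def field_simps)
  finally show False using small[OF \<open>T \<ge> 0\<close>] \<open>d > 0\<close> by simp
qed

lemma v_absent_unstable:
  assumes "0 \<le> p" "p \<le> 1" "0 \<le> s"
  shows "unstable_in F orthant (p, 0, s)"
  unfolding unstable_in_def stable_in_def
proof
  assume "\<forall>\<epsilon>>0. \<exists>\<delta>>0. \<forall>x. ode_solution F x \<and> x 0 \<in> orthant \<and> dist (x 0) (p, 0, s) < \<delta> \<longrightarrow>
    (\<forall>t\<ge>0. dist (x t) (p, 0, s) < \<epsilon>)"
  then obtain \<delta> where "\<delta> > 0" and close: "\<forall>x. ode_solution F x \<and> x 0 \<in> orthant \<and> dist (x 0) (p, 0, s) < \<delta>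
      \<longrightarrow> (\<forall>t\<ge>0. dist (x t) (p, 0, s) < 1 / 2)"
    by (auto dest: spec[of _ "1 / 2"])
  define d where "d = min (\<delta> / 2) (1 / 4)"
  have d: "0 < d" "d < \<delta>" "d \<le> v_max" using \<open>\<delta> > 0\<close> v_max_ge_1 by (auto simp: d_def)
  obtain x where sol: "ode_solution F x" and x0: "x 0 = (p, d, s)" and orth: "\<And>t. t \<ge> 0 \<Longrightarrow> x t \<in> orthant"
    using ode_solution_exists[OF assms(1,2) less_imp_le[OF d(1)] d(3) assms(3)] by blast
  obtain t where "t \<ge> 0" "fst (snd (x t)) \<ge> 1 / 2"
    using v_escapes[OF sol orth] x0 d(1) by auto
  moreover have "dist (x 0) (p, 0, s) < \<delta>" using d by (simp add: x0 dist_Pair_Pair dist_real_def)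
  then have "dist (x t) (p, 0, s) < 1 / 2" using close sol orth[of 0] \<open>t \<ge> 0\<close> by simp
  moreover have "\<bar>fst (snd (x t))\<bar> \<le> dist (x t) (p, 0, s)"
    using dist_fst_le[of "snd (x t)" "(0, s)"] dist_snd_le[of "x t" "(p, 0, s)"] by (simp add: dist_real_def)
  ultimately show False by simp
qed

lemma saturated_is_equilibrium:
  assumes "saturated p q s"
  shows "is_equilibrium F (p, q, s)"
proof -
  have "p * (r1 * (1 - p) - a12 * q - a13 * s) = 0" "q * (r2 * (1 - q) + a21 * p) = 0"
    "s * (a31 * p - mu) = 0"
    using assms by (auto simp: saturated_def)
  then show ?thesis by (simp add: is_equilibrium_def field_def zero_prod_def algebra_simps)
qed

lemma saturated_E2: "r1 \<le> a12 \<Longrightarrow> saturated 0 1 0"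
  using pos by (simp add: saturated_def)

lemma saturated_E12:
  defines "D \<equiv> r1 * r2 + a12 * a21"
  assumes "r1 > a12" and "mu > a31 * (r2 * (r1 - a12) / D)"
  shows "saturated (r2 * (r1 - a12) / D) ((r1 * r2 + r1 * a21) / D) 0" and "r2 * (r1 - a12) / D > 0"
proof -
  have "D > 0" using pos by (simp add: D_def add_pos_pos)
  then show "r2 * (r1 - a12) / D > 0" using assms(2) pos by simp
  moreover have "(r1 * r2 + r1 * a21) / D > 0" using \<open>D > 0\<close> pos by (simp add: add_pos_pos)
  moreover have "r2 * (1 - (r1 * r2 + r1 * a21) / D) + a21 * (r2 * (r1 - a12) / D)
      = (r2 * (D - (r1 * r2 + r1 * a21)) + a21 * (r2 * (r1 - a12))) / D"
    using \<open>D > 0\<close> by (simp add: field_simps)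
  moreover have "r1 * (1 - r2 * (r1 - a12) / D) - a12 * ((r1 * r2 + r1 * a21) / D)
      = (r1 * (D - r2 * (r1 - a12)) - a12 * (r1 * r2 + r1 * a21)) / D"
    using \<open>D > 0\<close> by (simp add: field_simps)
  ultimately show "saturated (r2 * (r1 - a12) / D) ((r1 * r2 + r1 * a21) / D) 0"
    using assms(3) by (simp add: saturated_def D_def algebra_simps)
qed

lemma saturated_E_star:
  defines "W \<equiv> r1 * r2 * a31 - r1 * r2 * mu - a12 * a31 * r2 - a12 * a21 * mu"
  assumes "W > 0"
  shows "saturated (mu / a31) (1 + a21 * mu / (a31 * r2)) (W / (a13 * a31 * r2))"
    and "mu / a31 > 0" and "1 + a21 * mu / (a31 * r2) > 0" and "W / (a13 * a31 * r2) > 0"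
proof -
  show pos_coords: "mu / a31 > 0" "1 + a21 * mu / (a31 * r2) > 0" "W / (a13 * a31 * r2) > 0"
    using pos assms(2) by (simp_all add: add_pos_pos)
  have "r1 * (1 - mu / a31) - a12 * (1 + a21 * mu / (a31 * r2)) - a13 * (W / (a13 * a31 * r2))
      = (r1 * (a31 * r2 - mu * r2) - a12 * (a31 * r2 + a21 * mu) - W) / (a31 * r2)"
    using pos by (simp add: field_simps)
  also have "\<dots> = 0" by (simp add: W_def algebra_simps)
  finally have "r1 * (1 - mu / a31) - a12 * (1 + a21 * mu / (a31 * r2)) - a13 * (W / (a13 * a31 * r2)) = 0" .
  moreover have "r2 * (1 - (1 + a21 * mu / (a31 * r2))) + a21 * (mu / a31) = 0"
    using pos by (simp add: field_simps)
  ultimately show "saturated (mu / a31) (1 + a21 * mu / (a31 * r2)) (W / (a13 * a31 * r2))"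
    using pos_coords pos by (simp add: saturated_def)
qed

end

theorem proposition1:
  fixes r1 r2 a12 a13 a21 a31 mu :: real
  assumes pos: "r1 > 0" "r2 > 0" "a12 > 0" "a13 > 0" "a21 > 0" "a31 > 0" "mu > 0"
  defines "F \<equiv> field r1 r2 a12 a13 a21 a31 mu"
      and "u12 \<equiv> r2 * (r1 - a12) / (r1 * r2 + a12 * a21)"
      and "v12 \<equiv> (r1 * r2 + r1 * a21) / (r1 * r2 + a12 * a21)"
      and "E13 \<equiv> (mu / a31, 0, r1 * (a31 - mu) / (a13 * a31))"
      and "Estar \<equiv> (mu / a31, 1 + a21 * mu / (a31 * r2),
                   (r1 * r2 * a31 - r1 * r2 * mu - a12 * a31 * r2 - a12 * a21 * mu) / (a13 * a31 * r2))"
  shows "unstable_in F orthant (0, 0, 0)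
       \<and> unstable_in F orthant (1, 0, 0)
       \<and> (r1 \<le> a12 \<longrightarrow> glob_asym_stable_in F orthant pos_orthant (0, 1, 0))
       \<and> (r1 > a12 \<and> mu > a31 * u12 \<longrightarrow> loc_asym_stable_in F orthant (u12, v12, 0))
       \<and> (a31 > mu \<longrightarrow> unstable_in F orthant E13)
       \<and> (r1 * r2 * a31 - r1 * r2 * mu - a12 * a31 * r2 - a12 * a21 * mu > 0 \<longrightarrow>
           Estar \<in> pos_orthant \<and> is_equilibrium F Estar \<and> loc_asym_stable_in F orthant Estar)"
proof -
  interpret three_species r1 r2 a12 a13 a21 a31 mu using pos by unfold_locales
  have E2: "glob_asym_stable_in F orthant pos_orthant (0, 1, 0)" if "r1 \<le> a12"
    unfolding glob_asym_stable_in_def F_def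
  proof (intro conjI allI impI saturated_stable[OF saturated_E2[OF that]])
    fix x assume "ode_solution (field r1 r2 a12 a13 a21 a31 mu) x \<and> x 0 \<in> pos_orthant"
    then show "(x \<longlongrightarrow> (0, 1, 0)) at_top"
      using saturated_attracts[OF saturated_E2[OF that]] pos
      by (auto simp: pos_orthant_def in_volterra_dom_def volterra_dom_def case_prod_beta)
  qed
  have E13: "unstable_in F orthant E13" if "a31 > mu"
    unfolding F_def E13_def using that pos by (intro v_absent_unstable) auto
  show ?thesis
    using v_absent_unstable[of 0 0] v_absent_unstable[of 1 0] E2 E13
      saturated_loc_asym_stable[OF saturated_E12(1)] saturated_E12(2)
      saturated_loc_asym_stable[OF saturated_E_star(1)] saturated_E_star(2-4)
      saturated_is_equilibrium[OF saturated_E_star(1)]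
    by (auto simp: F_def u12_def v12_def Estar_def pos_orthant_def)
qed

end
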